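(* Let $t \geq 1$, $W \geq 2$ and $R \geq 2$. Then there is no fast write (W1R2) implementation of a multi-writer multi-reader atomic register in the message-passing client–server model described in the context, i.e., no wait-free implementation tolerating the crash of up to $t$ of the $S$ servers in which every write operation completes after one round-trip of communication and every read operation completes after (at most) two round-trips of communication.
   Context: System model: there are three disjoint sets of processes: a set of $S \geq 2$ servers $\{s_1,\dots,s_S\}$, a set of $R$ readers $\{r_1,\dots,r_R\}$ and a set of $W$ writers $\{w_1,\dots,w_W\}$ (readers and writers are called clients). Clients and servers communicate by asynchronous message passing over bidirectional reliable channels; there is no communication between servers and no communication between clients. In any execution, any number of clients and up to $t$ of the $S$ servers may crash. An implementation is wait-free: every invoked read or write operation of a non-crashed client eventually returns regardless of the status of other clients. Only writers invoke $write(v)$ and only readers invoke $read()$, which returns a value. A round-trip of communication is one phase in which the client sends a message to all servers (to query or update them) and waits for replies; since up to $t$ servers may crash, a client can only wait for replies from $S-t$ servers. A W1R2 implementation is one in which every write uses exactly one round-trip and every read uses two round-trips. Atomicity: an execution is a sequence of invocation and response events with distinct global timestamps; $O_1 \prec_\sigma O_2$ if the response of $O_1$ occurs before the invocation of $O_2$. An execution is well-formed if each client's subsequence is sequential (each invocation immediately followed by its matching response). The register is atomic if for every well-formed execution $\sigma$ there is a sequential permutation $\pi$ of all its operations such that (i) if $O_1 \prec_\sigma O_2$ then $O_1$ appears before $O_2$ in $\pi$, and (ii) each read returns the value written by the latest preceding write in $\pi$. *)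

theory Defs
  imports Main
begin

text \<open>Servers are 0..S-1, writers are Wr i (i < W), readers are Rd j (j < R).
 Register values are natural numbers; the initial value of the register is 0.\<close>

datatype client = Wr nat | Rd nat

datatype phase = Idle | WPh nat | RPh1 | RPh2

datatype event = InvW client nat | InvR client | RespW client | RespR client nat

text \<open>A W1R2 implementation (protocol). Type parameters: 'c client local state,
 's server local state, 'm messages. Everything is deterministic and arbitrary.\<close>
record ('c, 's, 'm) proto =
  srv_init :: "nat \<Rightarrow> 's"
  srv_step :: "nat \<Rightarrow> 's \<Rightarrow> client \<Rightarrow> 'm \<Rightarrow> 's \<times> 'm"
     \<comment> \<open>server j, its state, sender, message \<mapsto> new state, reply\<close>
  cl_init  :: "client \<Rightarrow> 'c"
  w_req    :: "client \<Rightarrow> 'c \<Rightarrow> nat \<Rightarrow> nat \<Rightarrow> 'm"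
     \<comment> \<open>write(v): message sent to server j\<close>
  w_done   :: "client \<Rightarrow> 'c \<Rightarrow> nat \<Rightarrow> (nat \<rightharpoonup> 'm) \<Rightarrow> 'c"
  r_req1   :: "client \<Rightarrow> 'c \<Rightarrow> nat \<Rightarrow> 'm"
  r_mid    :: "client \<Rightarrow> 'c \<Rightarrow> (nat \<rightharpoonup> 'm) \<Rightarrow> 'c"
  r_req2   :: "client \<Rightarrow> 'c \<Rightarrow> nat \<Rightarrow> 'm"
  r_done   :: "client \<Rightarrow> 'c \<Rightarrow> (nat \<rightharpoonup> 'm) \<Rightarrow> 'c \<times> nat"
  cl_late  :: "client \<Rightarrow> 'c \<Rightarrow> nat \<Rightarrow> 'm \<Rightarrow> 'c"
     \<comment> \<open>local processing of a reply that is not used by the current round trip\<close>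

record ('c, 's, 'm) conf =
  sst  :: "nat \<Rightarrow> 's"
  cst  :: "client \<Rightarrow> 'c"
  ph   :: "client \<Rightarrow> phase"
  opn  :: "client \<Rightarrow> nat"
  reqs :: "(client \<times> nat \<times> nat \<times> nat \<times> 'm) set"  \<comment> \<open>(from, to server, op no, round, msg)\<close>
  reps :: "(nat \<times> client \<times> nat \<times> nat \<times> 'm) set"  \<comment> \<open>(from server, to, op no, round, msg)\<close>
  got  :: "client \<Rightarrow> nat \<rightharpoonup> 'm"

definition init_conf :: "('c, 's, 'm) proto \<Rightarrow> ('c, 's, 'm) conf" where
  "init_conf P = \<lparr> sst = srv_init P, cst = cl_init P, ph = (\<lambda>_. Idle), opn = (\<lambda>_. 0),
                   reqs = {}, reps = {}, got = (\<lambda>_. Map.empty) \<rparr>"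

fun round_of :: "phase \<Rightarrow> nat" where
  "round_of Idle = 0"
| "round_of (WPh _) = 1"
| "round_of RPh1 = 1"
| "round_of RPh2 = 2"

text \<open>Asynchrony: any enabled step may be taken at any time;
 messages may stay in transit forever (covering crashes of clients and of servers in
 finite executions).\<close>
inductive reach :: "nat \<Rightarrow> nat \<Rightarrow> nat \<Rightarrow> nat \<Rightarrow> ('c, 's, 'm) proto
                     \<Rightarrow> ('c, 's, 'm) conf \<Rightarrow> event list \<Rightarrow> bool"
  for S t W R :: nat and P :: "('c, 's, 'm) proto" where
  init: "reach S t W R P (init_conf P) []"
| inv_w: "\<lbrakk> reach S t W R P C h; i < W; ph C (Wr i) = Idle \<rbrakk> \<Longrightarrow>
     reach S t W R P
       (C\<lparr> ph := (ph C)(Wr i := WPh v), opn := (opn C)(Wr i := Suc (opn C (Wr i))),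
           got := (got C)(Wr i := Map.empty),
           reqs := reqs C \<union> {(Wr i, j, Suc (opn C (Wr i)), 1, w_req P (Wr i) (cst C (Wr i)) v j) | j. j < S} \<rparr>)
       (h @ [InvW (Wr i) v])"
| inv_r: "\<lbrakk> reach S t W R P C h; i < R; ph C (Rd i) = Idle \<rbrakk> \<Longrightarrow>
     reach S t W R P
       (C\<lparr> ph := (ph C)(Rd i := RPh1), opn := (opn C)(Rd i := Suc (opn C (Rd i))),
           got := (got C)(Rd i := Map.empty),
           reqs := reqs C \<union> {(Rd i, j, Suc (opn C (Rd i)), 1, r_req1 P (Rd i) (cst C (Rd i)) j) | j. j < S} \<rparr>)
       (h @ [InvR (Rd i)])"
| deliver: "\<lbrakk> reach S t W R P C h; (c, j, k, r, m) \<in> reqs C;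
              srv_step P j (sst C j) c m = (s', m') \<rbrakk> \<Longrightarrow>
     reach S t W R P
       (C\<lparr> sst := (sst C)(j := s'), reqs := reqs C - {(c, j, k, r, m)},
           reps := reps C \<union> {(j, c, k, r, m')} \<rparr>) h"
| recv: "\<lbrakk> reach S t W R P C h; (j, c, k, r, m) \<in> reps C; k = opn C c; ph C c \<noteq> Idle;
           r = round_of (ph C c); card (dom (got C c)) < S - t \<rbrakk> \<Longrightarrow>
     reach S t W R P
       (C\<lparr> reps := reps C - {(j, c, k, r, m)}, got := (got C)(c := (got C c)(j \<mapsto> m)) \<rparr>) h"
| recv_late: "\<lbrakk> reach S t W R P C h; (j, c, k, r, m) \<in> reps C;
           \<not> (k = opn C c \<and> ph C c \<noteq> Idle \<and> r = round_of (ph C c) \<and> card (dom (got C c)) < S - t) \<rbrakk> \<Longrightarrow>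
     reach S t W R P
       (C\<lparr> reps := reps C - {(j, c, k, r, m)}, cst := (cst C)(c := cl_late P c (cst C c) j m) \<rparr>) h"
| done_w: "\<lbrakk> reach S t W R P C h; ph C c = WPh v; card (dom (got C c)) = S - t \<rbrakk> \<Longrightarrow>
     reach S t W R P
       (C\<lparr> ph := (ph C)(c := Idle), cst := (cst C)(c := w_done P c (cst C c) v (got C c)) \<rparr>)
       (h @ [RespW c])"
| done_r1: "\<lbrakk> reach S t W R P C h; ph C c = RPh1; card (dom (got C c)) = S - t;
              c' = r_mid P c (cst C c) (got C c) \<rbrakk> \<Longrightarrow>
     reach S t W R P
       (C\<lparr> ph := (ph C)(c := RPh2), cst := (cst C)(c := c'), got := (got C)(c := Map.empty),
           reqs := reqs C \<union> {(c, j, opn C c, 2, r_req2 P c c' j) | j. j < S} \<rparr>) h"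
| done_r2: "\<lbrakk> reach S t W R P C h; ph C c = RPh2; card (dom (got C c)) = S - t;
              r_done P c (cst C c) (got C c) = (c', v) \<rbrakk> \<Longrightarrow>
     reach S t W R P
       (C\<lparr> ph := (ph C)(c := Idle), cst := (cst C)(c := c') \<rparr>) (h @ [RespR c v])"

fun ev_client :: "event \<Rightarrow> client" where
  "ev_client (InvW c _) = c" | "ev_client (InvR c) = c"
| "ev_client (RespW c) = c" | "ev_client (RespR c _) = c"

fun is_inv :: "event \<Rightarrow> bool" where
  "is_inv (InvW _ _) = True" | "is_inv (InvR _) = True" | "is_inv _ = False"

fun is_winv :: "event \<Rightarrow> bool" where
  "is_winv (InvW _ _) = True" | "is_winv _ = False"

fun is_rinv :: "event \<Rightarrow> bool" where
  "is_rinv (InvR _) = True" | "is_rinv _ = False"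

fun wval :: "event \<Rightarrow> nat" where
  "wval (InvW _ v) = v" | "wval _ = 0"

fun rval :: "event \<Rightarrow> nat" where
  "rval (RespR _ v) = v" | "rval _ = 0"

text \<open>Operations are identified by the position of their invocation in the history;
 in a well-formed history the response of the operation invoked at position i is the
 next event of the same client.\<close>
definition completed :: "event list \<Rightarrow> nat \<Rightarrow> bool" where
  "completed h i \<longleftrightarrow> (\<exists>j. i < j \<and> j < length h \<and> ev_client (h ! j) = ev_client (h ! i))"

definition resp_of :: "event list \<Rightarrow> nat \<Rightarrow> nat" where
  "resp_of h i = (LEAST j. i < j \<and> j < length h \<and> ev_client (h ! j) = ev_client (h ! i))"

definition precedes :: "event list \<Rightarrow> nat \<Rightarrow> nat \<Rightarrow> bool" where
  "precedes h i1 i2 \<longleftrightarrow> completed h i1 \<and> resp_of h i1 < i2"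

definition last_written :: "event list \<Rightarrow> nat list \<Rightarrow> nat \<Rightarrow> nat" where
  "last_written h pi a =
     (let ws = filter (\<lambda>x. is_winv (h ! x)) (take a pi) in
      if ws = [] then 0 else wval (h ! last ws))"

definition atomic :: "event list \<Rightarrow> bool" where
  "atomic h \<longleftrightarrow> (\<exists>pi. distinct pi
      \<and> (\<forall>i \<in> set pi. i < length h \<and> is_inv (h ! i) \<and> (completed h i \<or> is_winv (h ! i)))
      \<and> (\<forall>i < length h. is_inv (h ! i) \<and> completed h i \<longrightarrow> i \<in> set pi)
      \<and> (\<forall>a < length pi. \<forall>b < length pi. precedes h (pi ! a) (pi ! b) \<longrightarrow> a < b)
      \<and> (\<forall>a < length pi. is_rinv (h ! (pi ! a)) \<longrightarrow>
            rval (h ! resp_of h (pi ! a)) = last_written h pi a))"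

end

theory Submission
  imports Defs
begin

(* Let the writers Wr 0 and Wr 1 write 1 and 2, after which the readers Rd 0 and Rd 1 invoke
   reads.  For k = 0..S consider the configuration B k in which the servers below k processed
   the write of 2 before the write of 1 and the other servers the opposite order.  B 0 and B S
   are also reached when the writes are sequential (1 then 2, resp. 2 then 1), so atomicity
   forces reads from B 0 to return 2 and reads from B S to return 1; from every B k it forces
   both reads to return the same value, as both writes completed before.

   In executions where only the two readers take steps, no configuration is bivalent (an FLP
   style argument): two conflicting reader steps are indistinguishable to one of the readers
   except at one server, and since t >= 1 that reader can complete its read alone while
   ignoring that server.  Finally B k and B (k + 1) differ only at server k, so a solo read of
   Rd 0 ignoring server k returns the same value from both; hence the value 2 propagates from
   B 0 to B S, a contradiction. *)

section \<open>Atomic histories with two writes\<close>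

lemma resp_of_eqI:
  assumes "i < j" "j < length h" "ev_client (h ! j) = ev_client (h ! i)"
    and "\<And>k. i < k \<Longrightarrow> k < j \<Longrightarrow> ev_client (h ! k) \<noteq> ev_client (h ! i)"
  shows "completed h i" "resp_of h i = j"
proof -
  show "completed h i" using assms(1-3) unfolding completed_def by blast
  show "resp_of h i = j" unfolding resp_of_def
    by (rule Least_equality) (use assms in \<open>auto simp: not_less[symmetric]\<close>)
qed

lemma completed_append:
  assumes "completed h i"
  shows "completed (h @ h') i" "resp_of (h @ h') i = resp_of h i"
proof -
  let ?Q = "\<lambda>j. i < j \<and> j < length h \<and> ev_client (h ! j) = ev_client (h ! i)"
  have Q: "?Q (resp_of h i)"
    using assms unfolding completed_def resp_of_def by (rule LeastI_ex)
  have min: "\<not> ?Q k" if "k < resp_of h i" for k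
    using not_less_Least[OF that[unfolded resp_of_def]] .
  have eq: "completed (h @ h') i \<and> resp_of (h @ h') i = resp_of h i"
    using resp_of_eqI[of i "resp_of h i" "h @ h'"] Q min by (auto simp: nth_append)
  show "completed (h @ h') i" "resp_of (h @ h') i = resp_of h i" using eq by blast+
qed

lemma precedes_append: "precedes h i j \<Longrightarrow> precedes (h @ h') i j"
  unfolding precedes_def using completed_append by simp

lemma filter_take_distinct:
  assumes "distinct xs" "\<forall>x\<in>set xs. P x \<longrightarrow> (\<exists>b<a. b < length xs \<and> x = xs ! b)"
  shows "filter P (take a xs) = filter P xs"
proof -
  have "\<not> P x" if x: "x \<in> set (drop a xs)" for x
  proof
    assume "P x"
    obtain i where i: "i < length xs - a" "x = xs ! (a + i)" using x by (auto simp: in_set_conv_nth)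
    then obtain b where "b < a" "b < length xs" "xs ! (a + i) = xs ! b"
      using assms(2) \<open>P x\<close> by auto
    then show False using assms(1) i(1) nth_eq_iff_index_eq by fastforce
  qed
  then have "filter P (drop a xs) = []" by (simp add: filter_empty_conv)
  then show ?thesis by (metis append.right_neutral append_take_drop_id filter_append)
qed

lemma atomic_two_writes:
  assumes at: "atomic h" and ne: "i1 \<noteq> i2" and w1: "is_winv (h ! i1)" and w2: "is_winv (h ! i2)"
    and only: "\<forall>i<length h. is_winv (h ! i) \<longrightarrow> i = i1 \<or> i = i2"
    and c1: "completed h i1" and c2: "completed h i2"
  obtains w where "w = i1 \<or> w = i2" "precedes h i1 i2 \<Longrightarrow> w = i2"
    "\<And>p. \<lbrakk> is_rinv (h ! p); completed h p; precedes h i1 p; precedes h i2 p \<rbrakk>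
       \<Longrightarrow> rval (h ! resp_of h p) = wval (h ! w)"
proof -
  obtain pi where d: "distinct pi"
    and s2: "\<forall>i \<in> set pi. i < length h \<and> is_inv (h ! i) \<and> (completed h i \<or> is_winv (h ! i))"
    and s3: "\<forall>i < length h. is_inv (h ! i) \<and> completed h i \<longrightarrow> i \<in> set pi"
    and s4: "\<forall>a < length pi. \<forall>b < length pi. precedes h (pi ! a) (pi ! b) \<longrightarrow> a < b"
    and s5: "\<forall>a < length pi. is_rinv (h ! (pi ! a)) \<longrightarrow> rval (h ! resp_of h (pi ! a)) = last_written h pi a"
    using at unfolding atomic_def by blast
  have in_pi: "i \<in> set pi" if "completed h i" "is_inv (h ! i)" for i
    using s3 that less_trans unfolding completed_def by blast
  obtain a1 where a1: "a1 < length pi" "pi ! a1 = i1"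
    using in_pi[OF c1] w1 by (cases "h ! i1") (auto simp: in_set_conv_nth)
  obtain a2 where a2: "a2 < length pi" "pi ! a2 = i2"
    using in_pi[OF c2] w2 by (cases "h ! i2") (auto simp: in_set_conv_nth)
  let ?P = "\<lambda>x. is_winv (h ! x)"
  have filt: "filter ?P (take a pi) = filter ?P pi" if lt: "a1 < a" "a2 < a" for a
  proof (rule filter_take_distinct[OF d], intro ballI impI)
    fix x assume "x \<in> set pi" "?P x"
    then have "x = pi ! a1 \<or> x = pi ! a2" using only s2 a1 a2 by auto
    then show "\<exists>b<a. b < length pi \<and> x = pi ! b" using lt a1 a2 by blast
  qed
  define w where "w = last (filter ?P pi)"
  have fne: "filter ?P pi \<noteq> []" using a1 w1 by (metis filter_empty_conv nth_mem)
  have "w \<in> set (filter ?P pi)" unfolding w_def using fne last_in_set by blast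
  then have "w = i1 \<or> w = i2" using s2 only by auto
  moreover have "w = i2" if "precedes h i1 i2"
  proof -
    have "a1 < a2" using s4 a1 a2 that by blast
    then have "filter ?P (take (Suc a2) pi) = filter ?P pi" using filt[of "Suc a2"] by simp
    moreover have "take (Suc a2) pi = take a2 pi @ [i2]" using a2 by (simp add: take_Suc_conv_app_nth)
    ultimately have "filter ?P pi = filter ?P (take a2 pi) @ [i2]" using w2 by simp
    then show ?thesis unfolding w_def by simp
  qed
  moreover have "rval (h ! resp_of h p) = wval (h ! w)"
    if p: "is_rinv (h ! p)" "completed h p" "precedes h i1 p" "precedes h i2 p" for p
  proof -
    obtain a where a: "a < length pi" "pi ! a = p"
      using in_pi[OF p(2)] p(1) by (cases "h ! p") (auto simp: in_set_conv_nth)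
    have "a1 < a" "a2 < a" using s4 a1 a2 a p(3,4) by blast+
    then have "last_written h pi a = wval (h ! w)"
      using filt unfolding last_written_def w_def using fne by simp
    then show ?thesis using s5 a p(1) by metis
  qed
  ultimately show thesis using that by blast
qed

definition active_reader :: "client \<Rightarrow> bool" where
  "active_reader c \<longleftrightarrow> c = Rd 0 \<or> c = Rd 1"

definition read_invs :: "event list" where
  "read_invs = [InvR (Rd 0), InvR (Rd 1)]"

definition read_responses :: "event list \<Rightarrow> bool" where
  "read_responses s \<longleftrightarrow> distinct (map ev_client s) \<and> (\<forall>e\<in>set s. \<exists>c u. active_reader c \<and> e = RespR c u)"

lemma read_responses_snoc:
  "read_responses s \<Longrightarrow> active_reader c \<Longrightarrow> \<forall>u. RespR c u \<notin> set s \<Longrightarrow> read_responses (s @ [RespR c v])"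
  unfolding read_responses_def by auto

lemma read_response_completes:
  assumes s: "read_responses s" and u: "RespR c u \<in> set s"
  obtains p where "length hw \<le> p" "p < length hw + 2" "is_rinv ((hw @ read_invs @ s) ! p)"
    "completed (hw @ read_invs @ s) p" "rval ((hw @ read_invs @ s) ! resp_of (hw @ read_invs @ s) p) = u"
proof -
  let ?h = "hw @ read_invs @ s"
  obtain i where c: "c = Rd i" "i < 2" using s u unfolding read_responses_def active_reader_def by force
  obtain s1 s2 where s12: "s = s1 @ RespR c u # s2" using split_list[OF u] by blast
  have c_s1: "ev_client e \<noteq> c" if "e \<in> set s1" for e
    using s that unfolding read_responses_def s12 by auto
  let ?p = "length hw + i" and ?j = "length hw + 2 + length s1"
  have hp: "?h ! ?p = InvR c" using c by (auto simp: nth_append read_invs_def less_2_cases_iff)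
  have hj: "?h ! ?j = RespR c u" by (simp add: s12 nth_append read_invs_def)
  have other: "ev_client (?h ! k) \<noteq> c" if "?p < k" "k < ?j" for k
  proof (cases "k < length hw + 2")
    case True
    then have "k = length hw + 1" "i = 0" using that c by auto
    then show ?thesis using c by (simp add: nth_append read_invs_def)
  next
    case False
    then have "?h ! k = s1 ! (k - length hw - 2)" "k - length hw - 2 < length s1"
      using that by (auto simp: nth_append s12 read_invs_def)
    then show ?thesis using c_s1 nth_mem by metis
  qed
  have "completed ?h ?p" "resp_of ?h ?p = ?j"
    using resp_of_eqI[of ?p ?j ?h] hp hj other c by (auto simp: s12 read_invs_def)
  then show thesis using that[of ?p] hp hj c by simp
qed

lemma atomic_reads_after_two_writes:
  assumes at: "atomic (hw @ read_invs @ s)" and s: "read_responses s"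
    and ne: "i1 \<noteq> i2" and wi: "is_winv (hw ! i1)" "is_winv (hw ! i2)"
    and only: "\<forall>i<length hw. is_winv (hw ! i) \<longrightarrow> i = i1 \<or> i = i2"
    and c: "completed hw i1" "completed hw i2"
  obtains w where "w = i1 \<or> w = i2" "precedes hw i1 i2 \<Longrightarrow> w = i2"
    "\<And>c u. RespR c u \<in> set s \<Longrightarrow> u = wval (hw ! w)"
proof -
  let ?h = "hw @ read_invs @ s"
  have len: "i1 < length hw" "i2 < length hw" using c unfolding completed_def by auto
  have nth: "?h ! i = hw ! i" if "i < length hw" for i using that by (simp add: nth_append)
  have only': "\<forall>i<length ?h. is_winv (?h ! i) \<longrightarrow> i = i1 \<or> i = i2"
  proof (intro allI impI)
    fix i assume i: "i < length ?h" "is_winv (?h ! i)"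
    show "i = i1 \<or> i = i2"
    proof (cases "i < length hw")
      case False
      with i(1) have "?h ! i \<in> set (read_invs @ s)" by (simp add: nth_append)
      then show ?thesis using i(2) s unfolding read_responses_def read_invs_def by auto
    qed (use only nth i in auto)
  qed
  have ch: "completed ?h i1" "completed ?h i2" "resp_of ?h i1 = resp_of hw i1" "resp_of ?h i2 = resp_of hw i2"
    using completed_append c by blast+
  have "is_winv (?h ! i1)" "is_winv (?h ! i2)" using wi nth len by simp_all
  then obtain w where w: "w = i1 \<or> w = i2" "precedes ?h i1 i2 \<Longrightarrow> w = i2"
    "\<And>p. \<lbrakk> is_rinv (?h ! p); completed ?h p; precedes ?h i1 p; precedes ?h i2 p \<rbrakk>
       \<Longrightarrow> rval (?h ! resp_of ?h p) = wval (?h ! w)"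
    using atomic_two_writes[OF at ne _ _ only' ch(1,2)] by blast
  have resp_hw: "resp_of hw i < length hw" if "completed hw i" for i
    using that unfolding completed_def resp_of_def by (metis (mono_tags, lifting) LeastI_ex)
  have "u = wval (hw ! w)" if u: "RespR c u \<in> set s" for c u
  proof -
    obtain p where p: "length hw \<le> p" "is_rinv (?h ! p)" "completed ?h p" "rval (?h ! resp_of ?h p) = u"
      using read_response_completes[OF s u] by blast
    have "precedes ?h i1 p" "precedes ?h i2 p"
      using p(1) ch resp_hw[OF c(1)] resp_hw[OF c(2)] unfolding precedes_def by auto
    then have "u = wval (?h ! w)" using w(3) p(2-4) by simp
    then show ?thesis using w(1) nth len by auto
  qed
  then show thesis using that w(1,2) precedes_append by blast
qed

definition seq_writes :: "nat \<Rightarrow> nat \<Rightarrow> nat \<Rightarrow> nat \<Rightarrow> event list" where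
  "seq_writes a u b v = [InvW (Wr a) u, RespW (Wr a), InvW (Wr b) v, RespW (Wr b)]"

definition conc_writes :: "nat \<Rightarrow> nat \<Rightarrow> nat \<Rightarrow> nat \<Rightarrow> event list" where
  "conc_writes a u b v = [InvW (Wr a) u, InvW (Wr b) v, RespW (Wr a), RespW (Wr b)]"

lemma seq_writes_read_last:
  assumes "a \<noteq> b" "atomic (seq_writes a u b v @ read_invs @ s)" "read_responses s" "RespR c x \<in> set s"
  shows "x = v"
proof -
  let ?hw = "seq_writes a u b v"
  have c0: "completed ?hw 0" "resp_of ?hw 0 = 1"
    using resp_of_eqI[of 0 1 ?hw] by (simp_all add: seq_writes_def)
  have c2: "completed ?hw 2"
    using resp_of_eqI(1)[of 2 3 ?hw] by (simp add: seq_writes_def)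
  have w: "is_winv (?hw ! 0)" "is_winv (?hw ! 2)" and wv: "wval (?hw ! 2) = v"
    by (simp_all add: seq_writes_def numeral_2_eq_2)
  have only: "\<forall>i<length ?hw. is_winv (?hw ! i) \<longrightarrow> i = 0 \<or> i = 2"
    by (simp add: seq_writes_def less_Suc_eq numeral_eq_Suc)
  have pre: "precedes ?hw 0 2" using c0 by (simp add: precedes_def)
  show ?thesis
  proof (rule atomic_reads_after_two_writes[OF assms(2,3) _ w only c0(1) c2])
    fix w assume "precedes ?hw 0 2 \<Longrightarrow> w = 2" "\<And>c u. RespR c u \<in> set s \<Longrightarrow> u = wval (?hw ! w)"
    then show ?thesis using pre assms(4) wv by simp
  qed simp
qed

lemma conc_writes_reads_agree:
  assumes "a \<noteq> b" "atomic (conc_writes a u b v @ read_invs @ s)" "read_responses s"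
    "RespR c x \<in> set s" "RespR c' x' \<in> set s"
  shows "x = x'"
proof -
  let ?hw = "conc_writes a u b v"
  have c0: "completed ?hw 0"
    using resp_of_eqI(1)[of 0 2 ?hw] assms(1) by (simp add: conc_writes_def less_Suc_eq numeral_2_eq_2)
  have c1: "completed ?hw 1"
    using resp_of_eqI(1)[of 1 3 ?hw] assms(1) by (simp add: conc_writes_def less_Suc_eq numeral_eq_Suc)
  have w: "is_winv (?hw ! 0)" "is_winv (?hw ! 1)" by (simp_all add: conc_writes_def)
  have only: "\<forall>i<length ?hw. is_winv (?hw ! i) \<longrightarrow> i = 0 \<or> i = 1"
    by (simp add: conc_writes_def less_Suc_eq numeral_eq_Suc)
  show ?thesis
  proof (rule atomic_reads_after_two_writes[OF assms(2,3) zero_neq_one w only c0 c1])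
    fix w assume "\<And>c u. RespR c u \<in> set s \<Longrightarrow> u = wval (?hw ! w)"
    then show ?thesis using assms(4,5) by metis
  qed
qed

section \<open>Reaching the base configurations\<close>

lemma reach_finite_msgs:
  assumes "reach S t W R P C h"
  shows "finite (reqs C)" "finite (reps C)"
  using assms by (induction rule: reach.induct) (auto simp: init_conf_def setcompr_eq_image)

locale w1r2 =
  fixes S t W R :: nat and P :: "('c, 's, 'm) proto"
  assumes two_servers: "2 \<le> S" and crash_tolerant: "1 \<le> t" and two_writers: "2 \<le> W" and two_readers: "2 \<le> R"
begin

abbreviation quorum :: nat where
  "quorum \<equiv> S - t"

lemma quorum_less: "quorum < S"
  using two_servers crash_tolerant by linarith

definition deliver_all ::
  "('c, 's, 'm) conf \<Rightarrow> client \<Rightarrow> nat \<Rightarrow> nat \<Rightarrow> (nat \<Rightarrow> 'm) \<Rightarrow> nat set \<Rightarrow> ('c, 's, 'm) conf" where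
  "deliver_all C c k r M J = C\<lparr>
     sst := \<lambda>j. if j \<in> J then fst (srv_step P j (sst C j) c (M j)) else sst C j,
     reqs := reqs C - (\<lambda>j. (c, j, k, r, M j)) ` J,
     reps := reps C \<union> (\<lambda>j. (j, c, k, r, snd (srv_step P j (sst C j) c (M j)))) ` J \<rparr>"

lemma deliver_all_simps [simp]:
  "sst (deliver_all C c k r M J) j = (if j \<in> J then fst (srv_step P j (sst C j) c (M j)) else sst C j)"
  "x \<in> reqs (deliver_all C c k r M J) \<longleftrightarrow> x \<in> reqs C \<and> x \<notin> (\<lambda>j. (c, j, k, r, M j)) ` J"
  "y \<in> reps (deliver_all C c k r M J) \<longleftrightarrow>
     y \<in> reps C \<or> y \<in> (\<lambda>j. (j, c, k, r, snd (srv_step P j (sst C j) c (M j)))) ` J"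
  "cst (deliver_all C c k r M J) = cst C" "ph (deliver_all C c k r M J) = ph C"
  "opn (deliver_all C c k r M J) = opn C" "got (deliver_all C c k r M J) = got C"
  by (simp_all add: deliver_all_def)

lemma deliver_all_insert:
  assumes "j \<notin> J"
  shows "deliver_all C c k r M (insert j J) = deliver_all (deliver_all C c k r M {j}) c k r M J"
proof -
  have "sst (deliver_all C c k r M {j}) i = sst C i" if "i \<in> J" for i using assms that by auto
  then show ?thesis using assms unfolding deliver_all_def
    by (intro conf.equality) (auto simp: fun_eq_iff image_iff)
qed

lemma reach_deliver_all:
  assumes "reach S t W R P C h" "finite J" "\<forall>j\<in>J. (c, j, k, r, M j) \<in> reqs C"
  shows "reach S t W R P (deliver_all C c k r M J) h"
  using assms(2,1,3)
proof (induction J arbitrary: C rule: finite_induct)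
  case empty
  have "deliver_all C c k r M {} = C" unfolding deliver_all_def by simp
  then show ?case using empty by simp
next
  case (insert j J)
  have "deliver_all C c k r M {j} = C\<lparr> sst := (sst C)(j := fst (srv_step P j (sst C j) c (M j))),
      reqs := reqs C - {(c, j, k, r, M j)}, reps := reps C \<union> {(j, c, k, r, snd (srv_step P j (sst C j) c (M j)))} \<rparr>"
    unfolding deliver_all_def by (auto intro!: conf.equality)
  then have "reach S t W R P (deliver_all C c k r M {j}) h"
    using reach.deliver[OF insert.prems(1) _ surjective_pairing] insert.prems(2) by simp
  moreover have "\<forall>i\<in>J. (c, i, k, r, M i) \<in> reqs (deliver_all C c k r M {j})"
    using insert.prems(2) insert.hyps(2) by auto
  ultimately show ?case
    unfolding deliver_all_insert[OF insert.hyps(2)] by (rule insert.IH)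
qed

lemma reach_receive_replies:
  assumes "reach S t W R P C h" "ph C c \<noteq> Idle" "got C c = Map.empty" "n \<le> quorum"
    and "\<forall>j<n. (j, c, opn C c, round_of (ph C c), A j) \<in> reps C"
  shows "reach S t W R P (C\<lparr> reps := reps C - (\<lambda>j. (j, c, opn C c, round_of (ph C c), A j)) ` {..<n},
                           got := (got C)(c := \<lambda>j. if j < n then Some (A j) else None) \<rparr>) h"
  using assms(4,5)
proof (induction n)
  case 0
  have "(got C)(c := \<lambda>j. if j < (0::nat) then Some (A j) else None) = got C"
    using assms(3) by (auto simp: fun_eq_iff)
  then show ?case using assms(1) by simp
next
  case (Suc n)
  let ?e = "\<lambda>j. (j, c, opn C c, round_of (ph C c), A j)"
  let ?D = "C\<lparr> reps := reps C - ?e ` {..<n}, got := (got C)(c := \<lambda>j. if j < n then Some (A j) else None) \<rparr>"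
  have D: "reach S t W R P ?D h" using Suc by (simp add: fun_upd_def)
  have "dom (got ?D c) = {..<n}" by (auto split: if_splits)
  then have "card (dom (got ?D c)) < S - t" using Suc.prems(1) by simp
  then have r: "reach S t W R P (?D\<lparr> reps := reps ?D - {?e n}, got := (got ?D)(c := (got ?D c)(n \<mapsto> A n)) \<rparr>) h"
    using reach.recv[OF D, of n c "opn C c" "round_of (ph C c)" "A n"] Suc.prems assms(2) by (simp add: image_iff)
  have eq: "?D\<lparr> reps := reps ?D - {?e n}, got := (got ?D)(c := (got ?D c)(n \<mapsto> A n)) \<rparr>
      = C\<lparr> reps := reps C - ?e ` {..<Suc n}, got := (got C)(c := \<lambda>j. if j < Suc n then Some (A j) else None) \<rparr>"
    by (auto intro!: conf.equality simp: fun_eq_iff lessThan_Suc less_Suc_eq)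
  show ?case using r[unfolded eq] by (simp add: fun_upd_def)
qed

lemma reach_finish_write:
  assumes "reach S t W R P C h" "ph C c = WPh v" "got C c = Map.empty"
    and "\<forall>j<quorum. \<exists>m. (j, c, opn C c, 1, m) \<in> reps C"
  obtains X g x where "\<forall>e\<in>X. fst (snd e) = c"
    "reach S t W R P (C\<lparr> reps := reps C - X, got := (got C)(c := g), ph := (ph C)(c := Idle),
                        cst := (cst C)(c := x) \<rparr>) (h @ [RespW c])"
proof -
  obtain A where A: "\<forall>j<quorum. (j, c, opn C c, 1, A j) \<in> reps C"
    using assms(4) by metis
  let ?X = "(\<lambda>j. (j, c, opn C c, 1::nat, A j)) ` {..<quorum}"
  let ?g = "\<lambda>j. if j < quorum then Some (A j) else None"
  let ?D = "C\<lparr> reps := reps C - ?X, got := (got C)(c := ?g) \<rparr>"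
  have "reach S t W R P ?D h"
    using reach_receive_replies[OF assms(1) _ assms(3) le_refl, of A] assms(2) A by simp
  moreover have "dom ?g = {..<quorum}" by (auto split: if_splits)
  ultimately have "reach S t W R P (?D\<lparr> ph := (ph ?D)(c := Idle),
      cst := (cst ?D)(c := w_done P c (cst ?D c) v ?g) \<rparr>) (h @ [RespW c])"
    using reach.done_w[of S t W R P ?D h c v] assms(2) by simp
  then show thesis using that[where X = ?X and g = ?g] by auto
qed

definition readers_untouched :: "('c, 's, 'm) conf \<Rightarrow> bool" where
  "readers_untouched C \<longleftrightarrow> (\<forall>i. cst C (Rd i) = cl_init P (Rd i) \<and> ph C (Rd i) = Idle \<and> opn C (Rd i) = 0
     \<and> got C (Rd i) = Map.empty \<and> (\<forall>j k r m. (Rd i, j, k, r, m) \<notin> reqs C \<and> (j, Rd i, k, r, m) \<notin> reps C))"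

lemma readers_untouched_init: "readers_untouched (init_conf P)"
  by (simp add: readers_untouched_def init_conf_def)

lemma readers_untouched_deliver_all:
  "readers_untouched C \<Longrightarrow> readers_untouched (deliver_all C (Wr i) k r M J)"
  unfolding readers_untouched_def by auto

lemma readers_untouched_finish_write:
  "readers_untouched C \<Longrightarrow> readers_untouched (C\<lparr> reps := reps C - X, got := (got C)(Wr i := g),
     ph := (ph C)(Wr i := Idle), cst := (cst C)(Wr i := x) \<rparr>)"
  unfolding readers_untouched_def by auto

lemma reach_solo_write:
  assumes "reach S t W R P C h" "readers_untouched C" "i < W" "ph C (Wr i) = Idle"
  obtains C' where "reach S t W R P C' (h @ [InvW (Wr i) v, RespW (Wr i)])" "readers_untouched C'"
    "\<And>j. sst C' j = (if j < S then fst (srv_step P j (sst C j) (Wr i) (w_req P (Wr i) (cst C (Wr i)) v j)) else sst C j)"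
    "\<And>c. c \<noteq> Wr i \<Longrightarrow> ph C' c = ph C c \<and> cst C' c = cst C c"
proof -
  let ?k = "Suc (opn C (Wr i))" and ?M = "w_req P (Wr i) (cst C (Wr i)) v"
  let ?C1 = "C\<lparr> ph := (ph C)(Wr i := WPh v), opn := (opn C)(Wr i := ?k), got := (got C)(Wr i := Map.empty),
      reqs := reqs C \<union> {(Wr i, j, ?k, 1, ?M j) | j. j < S} \<rparr>"
  let ?C2 = "deliver_all ?C1 (Wr i) ?k 1 ?M {..<S}"
  have "reach S t W R P ?C1 (h @ [InvW (Wr i) v])" using reach.inv_w[OF assms(1,3,4)] .
  then have r2: "reach S t W R P ?C2 (h @ [InvW (Wr i) v])" by (rule reach_deliver_all) auto
  have "(j, Wr i, opn ?C2 (Wr i), 1, snd (srv_step P j (sst C j) (Wr i) (?M j))) \<in> reps ?C2" if "j < S" for j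
    using that by auto
  then have rp: "\<forall>j<quorum. \<exists>m. (j, Wr i, opn ?C2 (Wr i), 1, m) \<in> reps ?C2"
    using quorum_less by (meson less_trans)
  have p2: "ph ?C2 (Wr i) = WPh v" and g2: "got ?C2 (Wr i) = Map.empty" by simp_all
  obtain X g x where "\<forall>e\<in>X. fst (snd e) = Wr i" and r3: "reach S t W R P (?C2\<lparr> reps := reps ?C2 - X,
      got := (got ?C2)(Wr i := g), ph := (ph ?C2)(Wr i := Idle), cst := (cst ?C2)(Wr i := x) \<rparr>)
      ((h @ [InvW (Wr i) v]) @ [RespW (Wr i)])"
    by (rule reach_finish_write[OF r2 p2 g2 rp])
  have u2: "readers_untouched ?C2"
    using assms(2) readers_untouched_deliver_all unfolding readers_untouched_def by simp
  show thesis
  proof (rule that)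
    show "reach S t W R P (?C2\<lparr> reps := reps ?C2 - X, got := (got ?C2)(Wr i := g), ph := (ph ?C2)(Wr i := Idle),
      cst := (cst ?C2)(Wr i := x) \<rparr>) (h @ [InvW (Wr i) v, RespW (Wr i)])" using r3 by simp
    show "readers_untouched (?C2\<lparr> reps := reps ?C2 - X, got := (got ?C2)(Wr i := g), ph := (ph ?C2)(Wr i := Idle),
      cst := (cst ?C2)(Wr i := x) \<rparr>)" using u2 by (rule readers_untouched_finish_write)
  qed auto
qed

definition write_msg :: "nat \<Rightarrow> nat \<Rightarrow> nat \<Rightarrow> 'm" where
  "write_msg a u j = w_req P (Wr a) (cl_init P (Wr a)) u j"

definition written_state :: "nat \<Rightarrow> nat \<Rightarrow> nat \<Rightarrow> nat \<Rightarrow> nat \<Rightarrow> 's" where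
  "written_state a u b v j =
     fst (srv_step P j (fst (srv_step P j (srv_init P j) (Wr a) (write_msg a u j))) (Wr b) (write_msg b v j))"

lemma reach_seq_writes:
  assumes "a < W" "b < W" "a \<noteq> b"
  obtains C where "reach S t W R P C (seq_writes a u b v)" "readers_untouched C"
    "\<And>j. sst C j = (if j < S then written_state a u b v j else srv_init P j)"
proof -
  have "ph (init_conf P) (Wr a) = Idle" by (simp add: init_conf_def)
  then obtain C1 where r1: "reach S t W R P C1 ([] @ [InvW (Wr a) u, RespW (Wr a)])" and u1: "readers_untouched C1"
    and s1: "\<And>j. sst C1 j = (if j < S then fst (srv_step P j (sst (init_conf P) j) (Wr a)
                  (w_req P (Wr a) (cst (init_conf P) (Wr a)) u j)) else sst (init_conf P) j)"
    and o1: "\<And>c. c \<noteq> Wr a \<Longrightarrow> ph C1 c = ph (init_conf P) c \<and> cst C1 c = cst (init_conf P) c"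
    using reach_solo_write[OF reach.init readers_untouched_init assms(1), where v = u] by blast
  have "ph C1 (Wr b) = Idle" using o1[of "Wr b"] assms(3) by (simp add: init_conf_def)
  then obtain C2 where r2: "reach S t W R P C2 (([] @ [InvW (Wr a) u, RespW (Wr a)]) @ [InvW (Wr b) v, RespW (Wr b)])"
    and u2: "readers_untouched C2"
    and s2: "\<And>j. sst C2 j = (if j < S then fst (srv_step P j (sst C1 j) (Wr b) (w_req P (Wr b) (cst C1 (Wr b)) v j))
                              else sst C1 j)"
    and "\<And>c. c \<noteq> Wr b \<Longrightarrow> ph C2 c = ph C1 c \<and> cst C2 c = cst C1 c"
    using reach_solo_write[OF r1 u1 assms(2), where v = v] by blast
  show thesis
  proof (rule that[OF _ u2])
    show "reach S t W R P C2 (seq_writes a u b v)" using r2 by (simp add: seq_writes_def)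
    show "sst C2 j = (if j < S then written_state a u b v j else srv_init P j)" for j
      using s1 s2 o1[of "Wr b"] assms(3) by (simp add: written_state_def write_msg_def init_conf_def)
  qed
qed

definition split_state :: "nat \<Rightarrow> nat \<Rightarrow> 's" where
  "split_state k j = (if j < S then if j < k then written_state 1 2 0 1 j else written_state 0 1 1 2 j
                      else srv_init P j)"

lemma reach_conc_deliveries:
  assumes "k \<le> S"
  obtains C where "reach S t W R P C [InvW (Wr 0) 1, InvW (Wr 1) 2]" "readers_untouched C" "sst C = split_state k"
    "ph C (Wr 0) = WPh 1" "ph C (Wr 1) = WPh 2" "got C (Wr 0) = Map.empty" "got C (Wr 1) = Map.empty"
    "opn C (Wr 0) = 1" "opn C (Wr 1) = 1"
    "\<And>j. j < S \<Longrightarrow> \<exists>m. (j, Wr 0, 1, 1, m) \<in> reps C" "\<And>j. j < S \<Longrightarrow> \<exists>m. (j, Wr 1, 1, 1, m) \<in> reps C"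
proof -
  let ?I = "init_conf P" and ?M0 = "write_msg 0 1" and ?M1 = "write_msg 1 2"
  let ?C1 = "?I\<lparr> ph := (ph ?I)(Wr 0 := WPh 1), opn := (opn ?I)(Wr 0 := 1), got := (got ?I)(Wr 0 := Map.empty),
      reqs := reqs ?I \<union> {(Wr 0, j, 1, 1, ?M0 j) | j. j < S} \<rparr>"
  let ?C2 = "?C1\<lparr> ph := (ph ?C1)(Wr 1 := WPh 2), opn := (opn ?C1)(Wr 1 := 1), got := (got ?C1)(Wr 1 := Map.empty),
      reqs := reqs ?C1 \<union> {(Wr 1, j, 1, 1, ?M1 j) | j. j < S} \<rparr>"
  let ?C3 = "deliver_all ?C2 (Wr 1) 1 1 ?M1 {..<k}"
  let ?C4 = "deliver_all ?C3 (Wr 0) 1 1 ?M0 {..<S}"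
  let ?C5 = "deliver_all ?C4 (Wr 1) 1 1 ?M1 {k..<S}"
  have w: "0 < W" "1 < W" using two_writers by auto
  have "reach S t W R P ?C1 [InvW (Wr 0) 1]"
    using reach.inv_w[OF reach.init w(1), where v = 1] by (simp add: init_conf_def write_msg_def)
  from reach.inv_w[OF this w(2), where v = 2]
  have "reach S t W R P ?C2 [InvW (Wr 0) 1, InvW (Wr 1) 2]" by (simp add: init_conf_def write_msg_def)
  then have "reach S t W R P ?C3 [InvW (Wr 0) 1, InvW (Wr 1) 2]"
    by (rule reach_deliver_all) (use assms in auto)
  then have "reach S t W R P ?C4 [InvW (Wr 0) 1, InvW (Wr 1) 2]"
    by (rule reach_deliver_all) auto
  then have r5: "reach S t W R P ?C5 [InvW (Wr 0) 1, InvW (Wr 1) 2]"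
    by (rule reach_deliver_all) auto
  have "readers_untouched ?C2" using readers_untouched_init unfolding readers_untouched_def by simp
  then have u5: "readers_untouched ?C5" by (intro readers_untouched_deliver_all)
  show thesis
  proof (rule that[OF r5 u5])
    show "sst ?C5 = split_state k"
      using assms by (auto simp: fun_eq_iff split_state_def written_state_def init_conf_def)
    show "\<exists>m. (j, Wr 0, 1, 1, m) \<in> reps ?C5" if "j < S" for j
    proof
      show "(j, Wr 0, 1, 1, snd (srv_step P j (sst ?C3 j) (Wr 0) (?M0 j))) \<in> reps ?C5" using that by simp
    qed
    show "\<exists>m. (j, Wr 1, 1, 1, m) \<in> reps ?C5" if "j < S" for j
      using that by (cases "j < k") (auto simp: image_iff)
  qed (simp_all add: init_conf_def)
qed

lemma reach_conc_writes:
  assumes "k \<le> S"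
  obtains C where "reach S t W R P C (conc_writes 0 1 1 2)" "readers_untouched C" "sst C = split_state k"
proof -
  obtain C5 where C5: "reach S t W R P C5 [InvW (Wr 0) 1, InvW (Wr 1) 2]" "readers_untouched C5"
    "sst C5 = split_state k" "ph C5 (Wr 0) = WPh 1" "ph C5 (Wr 1) = WPh 2"
    "got C5 (Wr 0) = Map.empty" "got C5 (Wr 1) = Map.empty" "opn C5 (Wr 0) = 1" "opn C5 (Wr 1) = 1"
    "\<And>j. j < S \<Longrightarrow> \<exists>m. (j, Wr 0, 1, 1, m) \<in> reps C5" "\<And>j. j < S \<Longrightarrow> \<exists>m. (j, Wr 1, 1, 1, m) \<in> reps C5"
    using reach_conc_deliveries[OF assms] by blast
  have "\<forall>j<quorum. \<exists>m. (j, Wr 0, opn C5 (Wr 0), 1, m) \<in> reps C5" using C5(8,10) quorum_less by simp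
  then obtain X0 g0 x0 where X0: "\<forall>e\<in>X0. fst (snd e) = Wr 0"
    and r6: "reach S t W R P (C5\<lparr> reps := reps C5 - X0, got := (got C5)(Wr 0 := g0),
      ph := (ph C5)(Wr 0 := Idle), cst := (cst C5)(Wr 0 := x0) \<rparr>) ([InvW (Wr 0) 1, InvW (Wr 1) 2] @ [RespW (Wr 0)])"
    by (rule reach_finish_write[OF C5(1,4,6)])
  let ?C6 = "C5\<lparr> reps := reps C5 - X0, got := (got C5)(Wr 0 := g0), ph := (ph C5)(Wr 0 := Idle),
      cst := (cst C5)(Wr 0 := x0) \<rparr>"
  have rp6: "\<forall>j<quorum. \<exists>m. (j, Wr 1, opn ?C6 (Wr 1), 1, m) \<in> reps ?C6"
  proof (intro allI impI)
    fix j assume "j < quorum"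
    then have "j < S" using quorum_less by simp
    then obtain m where "(j, Wr 1, 1, 1, m) \<in> reps C5" using C5(11) by blast
    moreover have "(j, Wr 1, 1, 1, m) \<notin> X0" using X0 by fastforce
    ultimately have "(j, Wr 1, opn ?C6 (Wr 1), 1, m) \<in> reps ?C6" using C5(9) by simp
    then show "\<exists>m. (j, Wr 1, opn ?C6 (Wr 1), 1, m) \<in> reps ?C6" ..
  qed
  have p6: "ph ?C6 (Wr 1) = WPh 2" and g6: "got ?C6 (Wr 1) = Map.empty" using C5(5,7) by simp_all
  obtain X1 g1 x1 where "\<forall>e\<in>X1. fst (snd e) = Wr 1"
    and r7: "reach S t W R P (?C6\<lparr> reps := reps ?C6 - X1, got := (got ?C6)(Wr 1 := g1),
      ph := (ph ?C6)(Wr 1 := Idle), cst := (cst ?C6)(Wr 1 := x1) \<rparr>)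
      (([InvW (Wr 0) 1, InvW (Wr 1) 2] @ [RespW (Wr 0)]) @ [RespW (Wr 1)])"
    by (rule reach_finish_write[OF r6 p6 g6 rp6])
  show thesis
  proof (rule that)
    show "reach S t W R P (?C6\<lparr> reps := reps ?C6 - X1, got := (got ?C6)(Wr 1 := g1),
      ph := (ph ?C6)(Wr 1 := Idle), cst := (cst ?C6)(Wr 1 := x1) \<rparr>) (conc_writes 0 1 1 2)"
      using r7 by (simp add: conc_writes_def)
    show "readers_untouched (?C6\<lparr> reps := reps ?C6 - X1, got := (got ?C6)(Wr 1 := g1),
      ph := (ph ?C6)(Wr 1 := Idle), cst := (cst ?C6)(Wr 1 := x1) \<rparr>)"
      using readers_untouched_finish_write[OF C5(2)] by (rule readers_untouched_finish_write)
  qed (simp add: C5(3))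
qed

definition read_started :: "('c, 's, 'm) conf \<Rightarrow> client \<Rightarrow> bool" where
  "read_started C c \<longleftrightarrow> cst C c = cl_init P c \<and> ph C c = RPh1 \<and> opn C c = 1 \<and> got C c = Map.empty
     \<and> (\<forall>j k r m. (c, j, k, r, m) \<in> reqs C \<longleftrightarrow> j < S \<and> k = 1 \<and> r = 1 \<and> m = r_req1 P c (cl_init P c) j)
     \<and> (\<forall>j k r m. (j, c, k, r, m) \<notin> reps C)"

lemma reach_invoke_reads:
  assumes "reach S t W R P C h" "readers_untouched C"
  obtains B where "reach S t W R P B (h @ read_invs)" "sst B = sst C"
    "read_started B (Rd 0)" "read_started B (Rd 1)"
proof -
  have r: "0 < R" "1 < R" using two_readers by auto
  have i0: "ph C (Rd 0) = Idle" using assms(2) unfolding readers_untouched_def by blast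
  let ?C1 = "C\<lparr> ph := (ph C)(Rd 0 := RPh1), opn := (opn C)(Rd 0 := Suc (opn C (Rd 0))),
      got := (got C)(Rd 0 := Map.empty),
      reqs := reqs C \<union> {(Rd 0, j, Suc (opn C (Rd 0)), 1, r_req1 P (Rd 0) (cst C (Rd 0)) j) | j. j < S} \<rparr>"
  have r1: "reach S t W R P ?C1 (h @ [InvR (Rd 0)])" using reach.inv_r[OF assms(1) r(1) i0] .
  have i1: "ph ?C1 (Rd 1) = Idle" using assms(2) unfolding readers_untouched_def by simp
  let ?C2 = "?C1\<lparr> ph := (ph ?C1)(Rd 1 := RPh1), opn := (opn ?C1)(Rd 1 := Suc (opn ?C1 (Rd 1))),
      got := (got ?C1)(Rd 1 := Map.empty),
      reqs := reqs ?C1 \<union> {(Rd 1, j, Suc (opn ?C1 (Rd 1)), 1, r_req1 P (Rd 1) (cst ?C1 (Rd 1)) j) | j. j < S} \<rparr>"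
  have "reach S t W R P ?C2 ((h @ [InvR (Rd 0)]) @ [InvR (Rd 1)])" using reach.inv_r[OF r1 r(2) i1] .
  moreover have "read_started ?C2 (Rd 0)" "read_started ?C2 (Rd 1)"
    using assms(2) unfolding readers_untouched_def read_started_def by auto
  ultimately show thesis using that by (simp add: read_invs_def)
qed

end

section \<open>Reader-only executions\<close>

datatype 'm rstep =
    Deliver client nat nat nat 'm
  | Receive nat client nat nat 'm
  | Finish client

fun rstep_client :: "'m rstep \<Rightarrow> client" where
  "rstep_client (Deliver c j k r m) = c"
| "rstep_client (Receive j c k r m) = c"
| "rstep_client (Finish c) = c"

fun rstep_server :: "'m rstep \<Rightarrow> nat option" where
  "rstep_server (Deliver c j k r m) = Some j"
| "rstep_server (Receive j c k r m) = Some j"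
| "rstep_server (Finish c) = None"

fun is_deliver :: "'m rstep \<Rightarrow> bool" where
  "is_deliver (Deliver c j k r m) = True"
| "is_deliver _ = False"

context w1r2
begin

fun enabled :: "('c, 's, 'm) conf \<Rightarrow> 'm rstep \<Rightarrow> bool" where
  "enabled C (Deliver c j k r m) \<longleftrightarrow> active_reader c \<and> j < S \<and> (c, j, k, r, m) \<in> reqs C
     \<and> k = opn C c \<and> ph C c \<noteq> Idle \<and> r = round_of (ph C c)"
| "enabled C (Receive j c k r m) \<longleftrightarrow> active_reader c \<and> j < S \<and> (j, c, k, r, m) \<in> reps C
     \<and> k = opn C c \<and> ph C c \<noteq> Idle \<and> r = round_of (ph C c) \<and> card (dom (got C c)) < quorum"
| "enabled C (Finish c) \<longleftrightarrow> active_reader c \<and> (ph C c = RPh1 \<or> ph C c = RPh2) \<and> card (dom (got C c)) = quorum"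

fun exec :: "('c, 's, 'm) conf \<Rightarrow> 'm rstep \<Rightarrow> ('c, 's, 'm) conf" where
  "exec C (Deliver c j k r m) = C\<lparr> sst := (sst C)(j := fst (srv_step P j (sst C j) c m)),
     reqs := reqs C - {(c, j, k, r, m)}, reps := reps C \<union> {(j, c, k, r, snd (srv_step P j (sst C j) c m))} \<rparr>"
| "exec C (Receive j c k r m) = C\<lparr> reps := reps C - {(j, c, k, r, m)}, got := (got C)(c := (got C c)(j \<mapsto> m)) \<rparr>"
| "exec C (Finish c) = (if ph C c = RPh1 then
     C\<lparr> ph := (ph C)(c := RPh2), cst := (cst C)(c := r_mid P c (cst C c) (got C c)), got := (got C)(c := Map.empty),
        reqs := reqs C \<union> {(c, j, opn C c, 2, r_req2 P c (r_mid P c (cst C c) (got C c)) j) | j. j < S} \<rparr>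
     else C\<lparr> ph := (ph C)(c := Idle), cst := (cst C)(c := fst (r_done P c (cst C c) (got C c))) \<rparr>)"

fun exec_out :: "('c, 's, 'm) conf \<Rightarrow> 'm rstep \<Rightarrow> event list" where
  "exec_out C (Finish c) = (if ph C c = RPh2 then [RespR c (snd (r_done P c (cst C c) (got C c)))] else [])"
| "exec_out C _ = []"

lemma reach_exec:
  assumes "reach S t W R P C h" "enabled C l"
  shows "reach S t W R P (exec C l) (h @ exec_out C l)"
proof (cases l)
  case (Deliver c j k r m)
  then show ?thesis using assms reach.deliver[OF assms(1) _ surjective_pairing] by auto
next
  case (Receive j c k r m)
  then show ?thesis using assms by (auto intro: reach.recv)
next
  case (Finish c)
  then consider "ph C c = RPh1" | "ph C c = RPh2" using assms(2) by auto
  then show ?thesis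
  proof cases
    case 1
    then show ?thesis using assms Finish by (auto intro: reach.done_r1)
  next
    case 2
    then show ?thesis using assms Finish
      by (cases "r_done P c (cst C c) (got C c)") (auto intro: reach.done_r2)
  qed
qed

lemma ph_exec_other: "rstep_client l \<noteq> c \<Longrightarrow> ph (exec C l) c = ph C c"
  by (cases l) auto

lemma enabled_active_reader: "enabled C l \<Longrightarrow> active_reader (rstep_client l)"
  by (cases l) auto

definition avoids :: "nat set \<Rightarrow> 'm rstep \<Rightarrow> bool" where
  "avoids J l \<longleftrightarrow> (\<forall>j. rstep_server l = Some j \<longrightarrow> j \<notin> J)"

definition solo :: "client \<Rightarrow> nat set \<Rightarrow> 'm rstep list \<Rightarrow> bool" where
  "solo c J ls \<longleftrightarrow> (\<forall>l\<in>set ls. rstep_client l = c \<and> avoids J l)"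

lemma solo_append [simp]: "solo c J (ls1 @ ls2) \<longleftrightarrow> solo c J ls1 \<and> solo c J ls2"
  unfolding solo_def by auto

lemma solo_Cons [simp]: "solo c J (l # ls) \<longleftrightarrow> rstep_client l = c \<and> avoids J l \<and> solo c J ls"
  unfolding solo_def by auto

lemma solo_Nil [simp]: "solo c J []"
  unfolding solo_def by simp

definition indist :: "client \<Rightarrow> nat set \<Rightarrow> ('c, 's, 'm) conf \<Rightarrow> ('c, 's, 'm) conf \<Rightarrow> bool" where
  "indist c J C C' \<longleftrightarrow> (\<forall>j. j \<notin> J \<longrightarrow> sst C j = sst C' j) \<and> cst C c = cst C' c \<and> ph C c = ph C' c
     \<and> opn C c = opn C' c \<and> got C c = got C' c
     \<and> (\<forall>j k r m. j \<notin> J \<longrightarrow> ((c, j, k, r, m) \<in> reqs C \<longleftrightarrow> (c, j, k, r, m) \<in> reqs C'))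
     \<and> (\<forall>j k r m. j \<notin> J \<longrightarrow> ((j, c, k, r, m) \<in> reps C \<longleftrightarrow> (j, c, k, r, m) \<in> reps C'))"

lemma indist_sym: "indist c J C C' \<Longrightarrow> indist c J C' C"
  by (simp add: indist_def)

lemma indist_trans: "indist c J C C' \<Longrightarrow> indist c J C' C'' \<Longrightarrow> indist c J C C''"
  by (simp add: indist_def)

lemma indist_exec:
  assumes "indist c J C C'" "enabled C l" "rstep_client l = c" "avoids J l"
  shows "enabled C' l \<and> indist c J (exec C l) (exec C' l) \<and> exec_out C l = exec_out C' l"
  using assms by (cases l) (auto simp: indist_def avoids_def)

lemma indist_exec_other:
  assumes "rstep_client l \<noteq> c" "\<forall>j. is_deliver l \<and> rstep_server l = Some j \<longrightarrow> j \<in> J"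
  shows "indist c J C (exec C l)"
  using assms by (cases l) (auto simp: indist_def)

lemma indist_deliver_same_server:
  "c \<noteq> c' \<Longrightarrow> indist c {j} (exec C (Deliver c j k r m)) (exec C (Deliver c' j k' r' m'))"
  by (auto simp: indist_def)

definition independent :: "'m rstep \<Rightarrow> 'm rstep \<Rightarrow> bool" where
  "independent l1 l2 \<longleftrightarrow>
     (rstep_client l1 \<noteq> rstep_client l2 \<and> \<not> (is_deliver l1 \<and> is_deliver l2 \<and> rstep_server l1 = rstep_server l2))
   \<or> (rstep_client l1 = rstep_client l2 \<and> is_deliver l1 \<and> is_deliver l2 \<and> rstep_server l1 \<noteq> rstep_server l2)"

lemma independent_sym: "independent l1 l2 \<Longrightarrow> independent l2 l1"
  unfolding independent_def by auto

lemma exec_commute: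
  assumes "enabled C l1" "enabled C l2" "independent l1 l2"
  shows "enabled (exec C l1) l2 \<and> exec (exec C l1) l2 = exec (exec C l2) l1
    \<and> exec_out (exec C l1) l2 = exec_out C l2"
proof (cases l1)
  case (Deliver c1 j1 k1 r1 m1)
  then show ?thesis using assms
    by (cases l2) (auto simp: independent_def fun_upd_twist insert_commute Diff_insert[symmetric] Un_Diff intro!: conf.equality)
next
  case (Receive j1 c1 k1 r1 m1)
  then show ?thesis using assms
    by (cases l2) (auto simp: independent_def fun_upd_twist insert_commute Diff_insert[symmetric] Un_Diff intro!: conf.equality)
next
  case (Finish c1)
  then show ?thesis using assms
    by (cases l2) (auto simp: independent_def fun_upd_twist insert_commute Diff_insert[symmetric] Un_Diff intro!: conf.equality)
qed

text \<open>A server that has not replied yet still owes a reply for the current round trip, so the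
  reader can complete the round trip while ignoring any single server.\<close>
definition reader_inv :: "('c, 's, 'm) conf \<Rightarrow> client \<Rightarrow> bool" where
  "reader_inv C c \<longleftrightarrow> (\<forall>v. ph C c \<noteq> WPh v)
    \<and> (ph C c \<noteq> Idle \<longrightarrow> (\<forall>j<S. j \<in> dom (got C c) \<or> (\<exists>m. (c, j, opn C c, round_of (ph C c), m) \<in> reqs C)
                                   \<or> (\<exists>m. (j, c, opn C c, round_of (ph C c), m) \<in> reps C)))
    \<and> (ph C c = RPh1 \<longrightarrow> (\<forall>j m. (c, j, opn C c, 2, m) \<notin> reqs C \<and> (j, c, opn C c, 2, m) \<notin> reps C))
    \<and> dom (got C c) \<subseteq> {..<S} \<and> card (dom (got C c)) \<le> quorum"

lemma reader_inv_exec: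
  assumes inv: "reader_inv C c" and en: "enabled C l"
  shows "reader_inv (exec C l) c"
proof -
  let ?D = "exec C l"
  have fin: "finite (dom (got C c))"
    using inv finite_subset unfolding reader_inv_def by blast
  have same: "ph ?D c = ph C c" "opn ?D c = opn C c" if "\<not> (l = Finish c)"
    using that by (cases l; auto)+
  have cover: "j \<in> dom (got ?D c) \<or> (\<exists>m. (c, j, opn ?D c, round_of (ph ?D c), m) \<in> reqs ?D)
      \<or> (\<exists>m. (j, c, opn ?D c, round_of (ph ?D c), m) \<in> reps ?D)"
    if "ph ?D c \<noteq> Idle" "j < S" "l \<noteq> Finish c" for j
  proof -
    have "j \<in> dom (got C c) \<or> (\<exists>m. (c, j, opn C c, round_of (ph C c), m) \<in> reqs C)
        \<or> (\<exists>m. (j, c, opn C c, round_of (ph C c), m) \<in> reps C)"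
      using inv that same unfolding reader_inv_def by auto
    then show ?thesis using en that(3) by (cases l) (auto split: if_splits)
  qed
  show ?thesis
  proof (cases "l = Finish c")
    case True
    then consider "ph C c = RPh1" | "ph C c = RPh2" using en by auto
    then show ?thesis using inv en True by cases (auto simp: reader_inv_def)
  next
    case False
    have "card (dom (got ?D c)) \<le> quorum"
    proof (cases "\<exists>j k r m. l = Receive j c k r m")
      case True
      then obtain j k r m where "l = Receive j c k r m" by blast
      then show ?thesis using en fin by (auto simp: card_insert_if)
    next
      case False
      then have "got ?D c = got C c" using \<open>l \<noteq> Finish c\<close> by (cases l) auto
      then show ?thesis using inv unfolding reader_inv_def by simp
    qed
    moreover have "dom (got ?D c) \<subseteq> {..<S}"
      using inv en unfolding reader_inv_def by (cases l) auto
    moreover have "(c, j, opn ?D c, 2, m) \<notin> reqs ?D \<and> (j, c, opn ?D c, 2, m) \<notin> reps ?D"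
      if "ph ?D c = RPh1" for j m
      using inv en that same[OF False] unfolding reader_inv_def by (cases l) (auto split: if_splits)
    ultimately show ?thesis
      using inv cover False same[OF False] unfolding reader_inv_def by auto
  qed
qed

definition read_phase :: "event list \<Rightarrow> ('c, 's, 'm) conf \<Rightarrow> event list \<Rightarrow> bool" where
  "read_phase hb C h \<longleftrightarrow> reach S t W R P C h \<and> (\<forall>c. active_reader c \<longrightarrow> reader_inv C c)
     \<and> (\<exists>s. h = hb @ s \<and> read_responses s \<and> (\<forall>c. active_reader c \<longrightarrow> (ph C c = Idle \<longleftrightarrow> (\<exists>u. RespR c u \<in> set s))))"

lemma read_phase_exec:
  assumes "read_phase hb C h" "enabled C l"
  shows "read_phase hb (exec C l) (h @ exec_out C l)"
proof -
  obtain s where s: "h = hb @ s" "read_responses s"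
    and idle: "\<forall>c. active_reader c \<longrightarrow> (ph C c = Idle \<longleftrightarrow> (\<exists>u. RespR c u \<in> set s))"
    using assms(1) unfolding read_phase_def by blast
  have "reach S t W R P (exec C l) (h @ exec_out C l)"
    using assms reach_exec unfolding read_phase_def by blast
  moreover have "\<forall>c. active_reader c \<longrightarrow> reader_inv (exec C l) c"
    using assms reader_inv_exec unfolding read_phase_def by blast
  moreover have "read_responses (s @ exec_out C l)
      \<and> (\<forall>c. active_reader c \<longrightarrow> (ph (exec C l) c = Idle \<longleftrightarrow> (\<exists>u. RespR c u \<in> set (s @ exec_out C l))))"
  proof (cases "\<exists>c. l = Finish c \<and> ph C c = RPh2")
    case True
    then obtain c where c: "l = Finish c" "ph C c = RPh2" by blast
    have "active_reader c" using assms(2) c(1) by simp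
    then have "\<forall>u. RespR c u \<notin> set s" using idle c(2) by auto
    then show ?thesis using s(2) idle c \<open>active_reader c\<close> by (auto simp: read_responses_snoc)
  next
    case False
    then have "exec_out C l = []" by (cases l) auto
    moreover have "ph (exec C l) c = Idle \<longleftrightarrow> ph C c = Idle" for c
      using False assms(2) by (cases l) auto
    ultimately show ?thesis using s(2) idle by simp
  qed
  ultimately show ?thesis using s(1) unfolding read_phase_def by auto
qed

lemma read_phase_idle_responded:
  assumes "read_phase hb C h" "active_reader c" "ph C c = Idle"
  shows "\<exists>u. RespR c u \<in> set h"
  using assms unfolding read_phase_def by auto

inductive run :: "('c, 's, 'm) conf \<Rightarrow> 'm rstep list \<Rightarrow> ('c, 's, 'm) conf \<Rightarrow> event list \<Rightarrow> bool" where
  run_nil: "run C [] C []"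
| run_cons: "enabled C l \<Longrightarrow> run (exec C l) ls C' os \<Longrightarrow> run C (l # ls) C' (exec_out C l @ os)"

lemma run_read_phase: "run C ls C' os \<Longrightarrow> read_phase hb C h \<Longrightarrow> read_phase hb C' (h @ os)"
proof (induction arbitrary: h rule: run.induct)
  case (run_cons C l ls C' os)
  then show ?case using read_phase_exec by (metis append.assoc)
qed simp

lemma run_append: "run C ls1 C1 os1 \<Longrightarrow> run C1 ls2 C2 os2 \<Longrightarrow> run C (ls1 @ ls2) C2 (os1 @ os2)"
  by (induction rule: run.induct) (auto intro: run.intros)

lemma run_single: "enabled C l \<Longrightarrow> run C [l] (exec C l) (exec_out C l)"
  using run_cons[OF _ run_nil] by fastforce

lemma run_indist:
  assumes "run C ls C1 os" "solo c J ls" "indist c J C C'"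
  shows "\<exists>C1'. run C' ls C1' os"
  using assms
proof (induction arbitrary: C' rule: run.induct)
  case (run_nil C)
  then show ?case by (auto intro: run.run_nil)
next
  case (run_cons C l ls C2 os)
  then have "enabled C' l" "indist c J (exec C l) (exec C' l)" "exec_out C l = exec_out C' l"
    using indist_exec by auto
  then show ?case using run_cons by (metis run.run_cons solo_Cons)
qed

definition cur_reqs :: "('c, 's, 'm) conf \<Rightarrow> client \<Rightarrow> (client \<times> nat \<times> nat \<times> nat \<times> 'm) set" where
  "cur_reqs C c = {x \<in> reqs C. \<exists>j m. x = (c, j, opn C c, round_of (ph C c), m)}"

definition cur_reps :: "('c, 's, 'm) conf \<Rightarrow> client \<Rightarrow> (nat \<times> client \<times> nat \<times> nat \<times> 'm) set" where
  "cur_reps C c = {x \<in> reps C. \<exists>j m. x = (j, c, opn C c, round_of (ph C c), m)}"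

definition pending :: "('c, 's, 'm) conf \<Rightarrow> client \<Rightarrow> nat" where
  "pending C c = 2 * card (cur_reqs C c) + card (cur_reps C c)"

text \<open>A delivery trades a request for a reply, a receipt consumes a reply, and finishing
  the first round trip issues at most S new requests.\<close>
definition reader_weight :: "('c, 's, 'm) conf \<Rightarrow> client \<Rightarrow> nat" where
  "reader_weight C c =
     (case ph C c of RPh1 \<Rightarrow> 2 * S + 2 + pending C c | RPh2 \<Rightarrow> 1 + pending C c | _ \<Rightarrow> 0)"

definition weight :: "('c, 's, 'm) conf \<Rightarrow> nat" where
  "weight C = reader_weight C (Rd 0) + reader_weight C (Rd 1)"

lemma reader_weight_exec_other:
  assumes "rstep_client l \<noteq> c"
  shows "reader_weight (exec C l) c = reader_weight C c"
proof -
  have "cur_reqs (exec C l) c = cur_reqs C c" "cur_reps (exec C l) c = cur_reps C c" "ph (exec C l) c = ph C c"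
    using assms by (cases l; auto simp: cur_reqs_def cur_reps_def)+
  then show ?thesis unfolding reader_weight_def pending_def by (simp split: phase.split)
qed

lemma pending_exec_less:
  assumes "reach S t W R P C h" "enabled C l" "l \<noteq> Finish (rstep_client l)"
  shows "pending (exec C l) (rstep_client l) < pending C (rstep_client l)"
proof -
  let ?D = "exec C l"
  have fin: "finite (cur_reqs C c)" "finite (cur_reps C c)" for c
    using reach_finite_msgs[OF assms(1)] unfolding cur_reqs_def cur_reps_def by auto
  show ?thesis
  proof (cases l)
    case (Deliver c j k r m)
    let ?x = "(c, j, k, r, m)" and ?y = "(j, c, k, r, snd (srv_step P j (sst C j) c m))"
    have "?x \<in> cur_reqs C c" using assms(2) Deliver unfolding cur_reqs_def by auto
    then have "card (cur_reqs C c - {?x}) + 1 = card (cur_reqs C c)"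
      using card_Suc_Diff1[OF fin(1)] by simp
    moreover have "cur_reqs ?D c = cur_reqs C c - {?x}" using Deliver unfolding cur_reqs_def by auto
    moreover have "card (cur_reps ?D c) \<le> card (cur_reps C c) + 1"
    proof -
      have "cur_reps ?D c \<subseteq> insert ?y (cur_reps C c)"
        using Deliver unfolding cur_reps_def by auto
      then have "card (cur_reps ?D c) \<le> card (insert ?y (cur_reps C c))"
        using fin(2) by (intro card_mono) auto
      also have "\<dots> \<le> card (cur_reps C c) + 1" using fin(2) by (simp add: card_insert_if)
      finally show ?thesis .
    qed
    ultimately show ?thesis using Deliver unfolding pending_def by simp
  next
    case (Receive j c k r m)
    let ?y = "(j, c, k, r, m)"
    have "?y \<in> cur_reps C c" using assms(2) Receive unfolding cur_reps_def by auto
    moreover have "cur_reps ?D c = cur_reps C c - {?y}" "cur_reqs ?D c = cur_reqs C c"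
      using Receive unfolding cur_reps_def cur_reqs_def by auto
    ultimately show ?thesis
      using Receive card_Diff1_less[OF fin(2)] unfolding pending_def by simp
  qed (use assms(3) in simp)
qed

lemma pending_finish_first_round:
  assumes "reader_inv C c" "ph C c = RPh1"
  shows "pending (exec C (Finish c)) c \<le> 2 * S"
proof -
  let ?D = "exec C (Finish c)"
  have no2: "\<forall>j m. (c, j, opn C c, 2, m) \<notin> reqs C \<and> (j, c, opn C c, 2, m) \<notin> reps C"
    using assms unfolding reader_inv_def by simp
  let ?N = "(\<lambda>j. (c, j, opn C c, 2::nat, r_req2 P c (r_mid P c (cst C c) (got C c)) j)) ` {..<S}"
  have "cur_reqs ?D c \<subseteq> ?N" using assms(2) no2 unfolding cur_reqs_def by auto
  then have "card (cur_reqs ?D c) \<le> card ?N" by (intro card_mono) auto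
  also have "\<dots> \<le> S" using card_image_le[of "{..<S}"] by simp
  finally have "card (cur_reqs ?D c) \<le> S" .
  moreover have "cur_reps ?D c = {}" using assms(2) no2 unfolding cur_reps_def by auto
  ultimately show ?thesis unfolding pending_def by simp
qed

lemma reader_weight_exec_less:
  assumes "reach S t W R P C h" "reader_inv C (rstep_client l)" "enabled C l"
  shows "reader_weight (exec C l) (rstep_client l) < reader_weight C (rstep_client l)"
proof (cases "\<exists>c. l = Finish c")
  case True
  then obtain c where l: "l = Finish c" by blast
  then consider "ph C c = RPh1" | "ph C c = RPh2" using assms(3) by auto
  then show ?thesis
  proof cases
    case 1
    have "pending (exec C l) c \<le> 2 * S"
      using pending_finish_first_round[of C c] assms(2) l 1 by simp
    then show ?thesis using l 1 by (simp add: reader_weight_def)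
  next
    case 2
    then show ?thesis using l by (simp add: reader_weight_def)
  qed
next
  case False
  then have "l \<noteq> Finish (rstep_client l)" by blast
  moreover have "ph (exec C l) (rstep_client l) = ph C (rstep_client l)" using False by (cases l) auto
  moreover have "\<forall>v. ph C (rstep_client l) \<noteq> WPh v" using assms(2) unfolding reader_inv_def by blast
  moreover have "ph C (rstep_client l) \<noteq> Idle" using assms(3) by (cases l) auto
  ultimately show ?thesis using pending_exec_less[OF assms(1,3)]
    by (cases "ph C (rstep_client l)") (auto simp: reader_weight_def)
qed

lemma weight_exec_less:
  assumes "read_phase hb C h" "enabled C l"
  shows "weight (exec C l) < weight C"
proof -
  have "active_reader (rstep_client l)" using assms(2) by (rule enabled_active_reader)
  moreover have "reader_weight (exec C l) (rstep_client l) < reader_weight C (rstep_client l)"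
    using assms calculation reader_weight_exec_less unfolding read_phase_def by blast
  ultimately show ?thesis
    using reader_weight_exec_other[of l "Rd 0" C] reader_weight_exec_other[of l "Rd 1" C]
    unfolding weight_def active_reader_def by auto
qed

lemma unanswered_server:
  assumes "reader_inv C c" "card (dom (got C c)) < quorum" "J \<subseteq> {j0}"
  obtains j where "j < S" "j \<notin> J" "j \<notin> dom (got C c)"
proof -
  have "\<not> {..<S} - {j0} \<subseteq> dom (got C c)"
  proof
    assume sub: "{..<S} - {j0} \<subseteq> dom (got C c)"
    have "finite (dom (got C c))" using assms(1) finite_subset unfolding reader_inv_def by blast
    then have "card ({..<S} - {j0}) \<le> card (dom (got C c))" using sub by (rule card_mono)
    moreover have "S - 1 \<le> card ({..<S} - {j0})" by (simp add: card_Diff_singleton_if)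
    ultimately show False using assms(2) crash_tolerant by linarith
  qed
  then show thesis using that assms(3) by blast
qed

lemma collect_reply:
  assumes "read_phase hb C h" "active_reader c" "ph C c = RPh1 \<or> ph C c = RPh2"
    and "card (dom (got C c)) < quorum" "j < S" "j \<notin> J" "j \<notin> dom (got C c)"
  obtains ls C' os where "run C ls C' os" "solo c J ls" "ph C' c = ph C c"
    "dom (got C' c) = insert j (dom (got C c))" "read_phase hb C' (h @ os)"
proof -
  have nI: "ph C c \<noteq> Idle" using assms(3) by auto
  have "reader_inv C c" using assms(1,2) unfolding read_phase_def by blast
  then consider m where "(j, c, opn C c, round_of (ph C c), m) \<in> reps C"
    | m where "(c, j, opn C c, round_of (ph C c), m) \<in> reqs C"
    using nI assms(5,7) unfolding reader_inv_def by blast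
  then show thesis
  proof cases
    case (1 m)
    let ?l = "Receive j c (opn C c) (round_of (ph C c)) m"
    have en: "enabled C ?l" using 1 assms nI by simp
    show thesis
      by (rule that[OF run_single[OF en]]) (use assms(6) read_phase_exec[OF assms(1) en] in \<open>auto simp: avoids_def\<close>)
  next
    case (2 m)
    let ?l = "Deliver c j (opn C c) (round_of (ph C c)) m"
    let ?C1 = "exec C ?l"
    let ?l2 = "Receive j c (opn C c) (round_of (ph C c)) (snd (srv_step P j (sst C j) c m))"
    have en: "enabled C ?l" using 2 assms nI by simp
    have en2: "enabled ?C1 ?l2" using assms nI by simp
    have "read_phase hb (exec ?C1 ?l2) ((h @ exec_out C ?l) @ exec_out ?C1 ?l2)"
      using read_phase_exec[OF read_phase_exec[OF assms(1) en] en2] .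
    then show thesis
      by (intro that[OF run_cons[OF en run_single[OF en2]]]) (use assms(6) in \<open>auto simp: avoids_def\<close>)
  qed
qed

lemma finish_round_trip:
  assumes "read_phase hb C h" "active_reader c" "ph C c = RPh1 \<or> ph C c = RPh2" "J \<subseteq> {j0}"
  obtains ls C' os where "run C ls C' os" "solo c J ls" "ph C' c = ph C c"
    "card (dom (got C' c)) = quorum" "read_phase hb C' (h @ os)"
  using assms
proof (induction "quorum - card (dom (got C c))" arbitrary: C h rule: less_induct)
  case less
  have inv: "reader_inv C c" using less.prems(2,3) unfolding read_phase_def by blast
  then have fin: "finite (dom (got C c))" and le: "card (dom (got C c)) \<le> quorum"
    using finite_subset unfolding reader_inv_def by blast+
  show thesis
  proof (cases "card (dom (got C c)) = quorum")
    case True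
    then show thesis using less.prems(1,2) run_nil[of C] by fastforce
  next
    case False
    then have lt: "card (dom (got C c)) < quorum" using le by linarith
    obtain j where j: "j < S" "j \<notin> J" "j \<notin> dom (got C c)"
      using unanswered_server[OF inv lt less.prems(5)] by blast
    obtain ls1 C1 os1 where r1: "run C ls1 C1 os1" "solo c J ls1" "ph C1 c = ph C c"
      "dom (got C1 c) = insert j (dom (got C c))" "read_phase hb C1 (h @ os1)"
      using collect_reply[OF less.prems(2-4) lt j] by blast
    show thesis
    proof (rule less.hyps[OF _ _ r1(5) less.prems(3)])
      show "quorum - card (dom (got C1 c)) < quorum - card (dom (got C c))"
        using r1(4) fin j(3) lt by simp
      show "ph C1 c = RPh1 \<or> ph C1 c = RPh2" using r1(3) less.prems(4) by simp
      show "J \<subseteq> {j0}" by (rule less.prems(5))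
      fix ls2 C2 os2
      assume a: "run C1 ls2 C2 os2" "solo c J ls2" "ph C2 c = ph C1 c"
        "card (dom (got C2 c)) = quorum" "read_phase hb C2 ((h @ os1) @ os2)"
      show thesis using less.prems(1)[OF run_append[OF r1(1) a(1)]] a(2-5) r1(2,3) by simp
    qed
  qed
qed

lemma solo_finish_read:
  assumes "read_phase hb C h" "active_reader c" "ph C c = RPh2" "J \<subseteq> {j0}"
  obtains ls C' os u where "run C ls C' os" "solo c J ls" "RespR c u \<in> set os"
proof -
  obtain ls C1 os where r: "run C ls C1 os" "solo c J ls" "ph C1 c = RPh2" "card (dom (got C1 c)) = quorum"
    using finish_round_trip[OF assms(1,2) _ assms(4)] assms(3) by metis
  have en: "enabled C1 (Finish c)" using r(3,4) assms(2) by simp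
  have "run C (ls @ [Finish c]) (exec C1 (Finish c)) (os @ exec_out C1 (Finish c))"
    using run_append[OF r(1) run_single[OF en]] .
  then show thesis by (rule that) (use r(2,3) in \<open>auto simp: avoids_def\<close>)
qed

lemma solo_read_returns:
  assumes "read_phase hb C h" "active_reader c" "ph C c \<noteq> Idle" "J \<subseteq> {j0}"
  obtains ls C' os u where "run C ls C' os" "solo c J ls" "RespR c u \<in> set os"
proof -
  have "reader_inv C c" using assms(1,2) unfolding read_phase_def by blast
  then consider "ph C c = RPh1" | "ph C c = RPh2"
    using assms(3) unfolding reader_inv_def by (cases "ph C c") auto
  then show thesis
  proof cases
    case 1
    obtain ls C1 os where r: "run C ls C1 os" "solo c J ls" "ph C1 c = RPh1"
        "card (dom (got C1 c)) = quorum" "read_phase hb C1 (h @ os)"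
      using finish_round_trip[OF assms(1,2) _ assms(4)] 1 by metis
    have en: "enabled C1 (Finish c)" using r(3,4) assms(2) by simp
    have "ph (exec C1 (Finish c)) c = RPh2" using r(3) by simp
    then obtain ls2 C2 os2 u where r2: "run (exec C1 (Finish c)) ls2 C2 os2" "solo c J ls2" "RespR c u \<in> set os2"
      using solo_finish_read[OF read_phase_exec[OF r(5) en] assms(2) _ assms(4)] by blast
    have "run C (ls @ Finish c # ls2) C2 (os @ exec_out C1 (Finish c) @ os2)"
      using run_append[OF r(1) run_cons[OF en r2(1)]] .
    then show thesis by (rule that[where u = u]) (use r(2) r2(2,3) in \<open>auto simp: avoids_def\<close>)
  next
    case 2
    then show thesis using solo_finish_read[OF assms(1,2) _ assms(4)] that by blast
  qed
qed

section \<open>Valency\<close>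

definition outcomes :: "('c, 's, 'm) conf \<Rightarrow> event list \<Rightarrow> nat set" where
  "outcomes C h = {u. \<exists>ls C' os c. run C ls C' os \<and> RespR c u \<in> set (h @ os)}"

definition bivalent :: "('c, 's, 'm) conf \<Rightarrow> event list \<Rightarrow> bool" where
  "bivalent C h \<longleftrightarrow> (\<exists>u1 u2. u1 \<noteq> u2 \<and> u1 \<in> outcomes C h \<and> u2 \<in> outcomes C h)"

definition reads_agree :: "event list \<Rightarrow> bool" where
  "reads_agree hb \<longleftrightarrow>
     (\<forall>C h c c' u u'. read_phase hb C h \<and> RespR c u \<in> set h \<and> RespR c' u' \<in> set h \<longrightarrow> u = u')"

lemma outcomes_run: "run C ls C' os \<Longrightarrow> RespR c u \<in> set os \<Longrightarrow> u \<in> outcomes C h"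
  unfolding outcomes_def by fastforce

lemma outcomes_responded:
  assumes "read_phase hb C h" "reads_agree hb" "RespR c u \<in> set h"
  shows "outcomes C h \<subseteq> {u}"
proof
  fix v assume "v \<in> outcomes C h"
  then obtain ls C' os c' where r: "run C ls C' os" "RespR c' v \<in> set (h @ os)"
    unfolding outcomes_def by blast
  have "read_phase hb C' (h @ os)" using run_read_phase[OF r(1) assms(1)] .
  then show "v \<in> {u}" using assms(2,3) r(2) unfolding reads_agree_def by fastforce
qed

lemma outcomes_exec:
  assumes "enabled C l"
  shows "outcomes (exec C l) (h @ exec_out C l) \<subseteq> outcomes C h"
proof
  fix u assume "u \<in> outcomes (exec C l) (h @ exec_out C l)"
  then obtain ls C' os c where "run (exec C l) ls C' os" "RespR c u \<in> set ((h @ exec_out C l) @ os)"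
    unfolding outcomes_def by blast
  then show "u \<in> outcomes C h" using run_cons[OF assms] unfolding outcomes_def by fastforce
qed

lemma outcomes_first_step:
  assumes "u \<in> outcomes C h" "\<forall>c u. RespR c u \<notin> set h"
  obtains l where "enabled C l" "u \<in> outcomes (exec C l) (h @ exec_out C l)"
proof -
  obtain ls C' os c where r: "run C ls C' os" "RespR c u \<in> set (h @ os)"
    using assms(1) unfolding outcomes_def by blast
  show thesis
  proof (cases ls)
    case Nil
    then show thesis using r assms(2) by (auto elim: run.cases)
  next
    case (Cons l ls')
    then obtain os' where "enabled C l" "run (exec C l) ls' C' os'" "os = exec_out C l @ os'"
      using r(1) by (auto elim: run.cases)
    then show thesis using r(2) that unfolding outcomes_def by fastforce
  qed
qed

lemma outcomes_nonempty:
  assumes "read_phase hb C h"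
  obtains w where "w \<in> outcomes C h"
proof (cases "ph C (Rd 0) = Idle")
  case True
  then obtain u where "RespR (Rd 0) u \<in> set h"
    using read_phase_idle_responded[OF assms] by (auto simp: active_reader_def)
  then show thesis using that run_nil[of C] unfolding outcomes_def by fastforce
next
  case False
  have "active_reader (Rd 0)" by (simp add: active_reader_def)
  then obtain ls C' os u where "run C ls C' os" "solo (Rd 0) {} ls" "RespR (Rd 0) u \<in> set os"
    by (rule solo_read_returns[OF assms _ False, of "{}" 0]) simp
  then show thesis using that outcomes_run by blast
qed

text \<open>Two conflicting steps either deliver requests of the two readers to the same server j,
  which the first reader cannot distinguish outside j, or are steps of one reader, which the
  other reader cannot distinguish outside the (at most one) server they touch.\<close>
lemma dependent_steps_indist:
  assumes "enabled C l1" "enabled C l2" "\<not> independent l1 l2"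
    and "ph C (Rd 0) \<noteq> Idle" "ph C (Rd 1) \<noteq> Idle"
  obtains c J j0 where "active_reader c" "J \<subseteq> {j0}" "indist c J (exec C l1) (exec C l2)"
    "ph (exec C l1) c \<noteq> Idle"
proof (cases "rstep_client l1 = rstep_client l2")
  case False
  then obtain c j k r m c' k' r' m' where l: "l1 = Deliver c j k r m" "l2 = Deliver c' j k' r' m'"
    using assms(3) unfolding independent_def by (cases l1; cases l2) auto
  then have "indist c {j} (exec C l1) (exec C l2)"
    using False indist_deliver_same_server by simp
  moreover have "active_reader c" "ph (exec C l1) c \<noteq> Idle" using assms(1) l by auto
  ultimately show thesis using that by blast
next
  case True
  let ?a = "rstep_client l1"
  define b where "b = (if ?a = Rd 0 then Rd 1 else Rd 0)"
  have "active_reader ?a" using assms(1) by (rule enabled_active_reader)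
  then have b: "active_reader b" "b \<noteq> ?a" "b \<noteq> rstep_client l2"
    using True unfolding b_def active_reader_def by auto
  have "ph C b \<noteq> Idle" using assms(4,5) unfolding b_def by auto
  then have pb: "ph (exec C l1) b \<noteq> Idle" using ph_exec_other b(2) by metis
  have nd: "\<not> is_deliver l1 \<or> \<not> is_deliver l2 \<or> rstep_server l1 = rstep_server l2"
    using assms(3) True unfolding independent_def by blast
  obtain J j0 where J: "J \<subseteq> {j0}" "\<forall>j. is_deliver l1 \<and> rstep_server l1 = Some j \<longrightarrow> j \<in> J"
    "\<forall>j. is_deliver l2 \<and> rstep_server l2 = Some j \<longrightarrow> j \<in> J"
  proof (cases "\<exists>j. is_deliver l1 \<and> rstep_server l1 = Some j \<or> is_deliver l2 \<and> rstep_server l2 = Some j")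
    case True
    then obtain j where "is_deliver l1 \<and> rstep_server l1 = Some j \<or> is_deliver l2 \<and> rstep_server l2 = Some j"
      by blast
    then show thesis using that[of "{j}" j] nd by (cases l1; cases l2) auto
  next
    case False
    then show thesis using that[of "{}" 0] by auto
  qed
  have "indist b J (exec C l1) (exec C l2)"
    using indist_exec_other[OF b(2)[symmetric] J(2)] indist_exec_other[OF b(3)[symmetric] J(3)]
      indist_sym indist_trans by blast
  then show thesis using that b(1) J(1) pb by blast
qed

lemma common_outcome:
  assumes "read_phase hb C h" "enabled C l1" "enabled C l2"
    and "ph C (Rd 0) \<noteq> Idle" "ph C (Rd 1) \<noteq> Idle"
  obtains w where "w \<in> outcomes (exec C l1) (h @ exec_out C l1)" "w \<in> outcomes (exec C l2) (h @ exec_out C l2)"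
proof (cases "independent l1 l2")
  case True
  let ?C1 = "exec C l1" and ?h1 = "h @ exec_out C l1" and ?C2 = "exec C l2" and ?h2 = "h @ exec_out C l2"
  have c1: "enabled ?C1 l2" "exec ?C1 l2 = exec ?C2 l1" "exec_out ?C1 l2 = exec_out C l2"
    using exec_commute[OF assms(2,3) True] by auto
  have c2: "enabled ?C2 l1" "exec_out ?C2 l1 = exec_out C l1"
    using exec_commute[OF assms(3,2) independent_sym[OF True]] by auto
  obtain w where w: "w \<in> outcomes (exec ?C1 l2) (?h1 @ exec_out ?C1 l2)"
    using outcomes_nonempty[OF read_phase_exec[OF read_phase_exec[OF assms(1,2)] c1(1)]] by blast
  have "w \<in> outcomes ?C1 ?h1" using outcomes_exec[OF c1(1)] w by blast
  moreover have "outcomes (exec ?C1 l2) (?h1 @ exec_out ?C1 l2) = outcomes (exec ?C2 l1) (?h2 @ exec_out ?C2 l1)"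
    using c1 c2 unfolding outcomes_def by auto
  then have "w \<in> outcomes ?C2 ?h2" using outcomes_exec[OF c2(1)] w by blast
  ultimately show thesis by (rule that)
next
  case False
  obtain c J j0 where cj: "active_reader c" "J \<subseteq> {j0}" "indist c J (exec C l1) (exec C l2)"
    "ph (exec C l1) c \<noteq> Idle"
    using dependent_steps_indist[OF assms(2,3) False assms(4,5)] by blast
  obtain ls C' os w where s: "run (exec C l1) ls C' os" "solo c J ls" "RespR c w \<in> set os"
    using solo_read_returns[OF read_phase_exec[OF assms(1,2)] cj(1,4,2)] by blast
  obtain C'' where "run (exec C l2) ls C'' os" using run_indist[OF s(1,2) cj(3)] by blast
  then show thesis using that outcomes_run s by blast
qed

text \<open>By induction, the successors of a bivalent configuration are univalent, so two of its
  steps would lead to different outcomes, contradicting common_outcome.\<close>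
lemma not_bivalent:
  assumes "read_phase hb C h" "reads_agree hb"
  shows "\<not> bivalent C h"
  using assms
proof (induction "weight C" arbitrary: C h rule: less_induct)
  case less
  show ?case
  proof
    assume B: "bivalent C h"
    have nh: "\<forall>c u. RespR c u \<notin> set h"
      using outcomes_responded[OF less.prems] B unfolding bivalent_def by blast
    have pend: "ph C c \<noteq> Idle" if "active_reader c" for c
      using read_phase_idle_responded[OF less.prems(1) that] nh by blast
    obtain u1 u2 where u: "u1 \<noteq> u2" "u1 \<in> outcomes C h" "u2 \<in> outcomes C h"
      using B unfolding bivalent_def by blast
    obtain l1 where l1: "enabled C l1" "u1 \<in> outcomes (exec C l1) (h @ exec_out C l1)"
      using outcomes_first_step[OF u(2) nh] by blast
    obtain l2 where l2: "enabled C l2" "u2 \<in> outcomes (exec C l2) (h @ exec_out C l2)"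
      using outcomes_first_step[OF u(3) nh] by blast
    have "\<not> bivalent (exec C l) (h @ exec_out C l)" if "enabled C l" for l
      using less.hyps[OF weight_exec_less[OF less.prems(1) that] read_phase_exec[OF less.prems(1) that]
          less.prems(2)] .
    moreover obtain w where "w \<in> outcomes (exec C l1) (h @ exec_out C l1)" "w \<in> outcomes (exec C l2) (h @ exec_out C l2)"
      using common_outcome[OF less.prems(1) l1(1) l2(1)] pend by (auto simp: active_reader_def)
    ultimately have "w = u1" "w = u2" using l1 l2 unfolding bivalent_def by blast+
    then show False using u(1) by simp
  qed
qed

lemma read_phase_start:
  assumes "reach S t W R P B hb" "read_started B (Rd 0)" "read_started B (Rd 1)"
  shows "read_phase hb B hb"
proof -
  have "reader_inv B c" "ph B c \<noteq> Idle" if "active_reader c" for c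
    using that assms(2,3) unfolding active_reader_def read_started_def reader_inv_def by auto
  then show ?thesis
    using assms(1) unfolding read_phase_def read_responses_def by (intro conjI exI[of _ "[]"]) auto
qed

lemma indist_read_started:
  assumes "read_started B c" "read_started B' c" "\<forall>j. j \<noteq> k \<longrightarrow> sst B j = sst B' j"
  shows "indist c {k} B B'"
  using assms unfolding indist_def read_started_def by auto

definition write_history :: "nat \<Rightarrow> event list" where
  "write_history k = (if k = 0 then seq_writes 0 1 1 2 else if k = S then seq_writes 1 2 0 1
                      else conc_writes 0 1 1 2)"

lemma reach_write_history:
  assumes "k \<le> S"
  obtains C where "reach S t W R P C (write_history k)" "readers_untouched C" "sst C = split_state k"
proof -
  have w: "0 < W" "1 < W" using two_writers by auto
  consider "k = 0" | "k = S" | "0 < k" "k < S" using assms by linarith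
  then show thesis
  proof cases
    case 1
    obtain C where "reach S t W R P C (seq_writes 0 1 1 2)" "readers_untouched C"
      "\<And>j. sst C j = (if j < S then written_state 0 1 1 2 j else srv_init P j)"
      using reach_seq_writes[OF w zero_neq_one] by blast
    moreover have "write_history k = seq_writes 0 1 1 2" using 1 by (simp add: write_history_def)
    ultimately show thesis using that[of C] 1 by (simp add: split_state_def fun_eq_iff)
  next
    case 2
    obtain C where "reach S t W R P C (seq_writes 1 2 0 1)" "readers_untouched C"
      "\<And>j. sst C j = (if j < S then written_state 1 2 0 1 j else srv_init P j)"
      using reach_seq_writes[OF w(2,1) one_neq_zero] by blast
    moreover have "write_history k = seq_writes 1 2 0 1" using 2 two_servers by (simp add: write_history_def)
    ultimately show thesis using that[of C] 2 by (simp add: split_state_def fun_eq_iff)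
  next
    case 3
    then have "write_history k = conc_writes 0 1 1 2" by (simp add: write_history_def)
    then show thesis using reach_conc_writes[OF assms] that by metis
  qed
qed

lemma base_conf:
  assumes "k \<le> S"
  obtains B where "read_phase (write_history k @ read_invs) B (write_history k @ read_invs)"
    "sst B = split_state k" "read_started B (Rd 0)" "read_started B (Rd 1)"
proof -
  obtain C where C: "reach S t W R P C (write_history k)" "readers_untouched C" "sst C = split_state k"
    using reach_write_history[OF assms] by blast
  obtain B where B: "reach S t W R P B (write_history k @ read_invs)" "sst B = sst C"
    "read_started B (Rd 0)" "read_started B (Rd 1)"
    using reach_invoke_reads[OF C(1,2)] by blast
  show thesis by (rule that[OF read_phase_start[OF B(1,3,4)]]) (use B(2-4) C(3) in auto)
qed

end

locale atomic_w1r2 = w1r2 +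
  assumes reach_atomic: "reach S t W R P C h \<Longrightarrow> atomic h"
begin

lemma read_phase_atomic:
  assumes "read_phase (hw @ read_invs) C h"
  obtains s where "h = hw @ read_invs @ s" "read_responses s" "atomic (hw @ read_invs @ s)"
  using assms reach_atomic unfolding read_phase_def by auto

lemma read_phase_seq_writes_returns:
  assumes "read_phase (seq_writes a u b v @ read_invs) C h" "a \<noteq> b" "RespR c x \<in> set h"
  shows "x = v"
proof -
  obtain s where s: "h = seq_writes a u b v @ read_invs @ s" "read_responses s"
    "atomic (seq_writes a u b v @ read_invs @ s)"
    using read_phase_atomic[OF assms(1)] by blast
  have "RespR c x \<in> set s" using assms(3) s(1) by (auto simp: seq_writes_def read_invs_def)
  then show ?thesis using seq_writes_read_last[OF assms(2) s(3,2)] by blast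
qed

lemma read_phase_conc_writes_agree:
  assumes "read_phase (conc_writes a u b v @ read_invs) C h" "a \<noteq> b"
    "RespR c x \<in> set h" "RespR c' x' \<in> set h"
  shows "x = x'"
proof -
  obtain s where s: "h = conc_writes a u b v @ read_invs @ s" "read_responses s"
    "atomic (conc_writes a u b v @ read_invs @ s)"
    using read_phase_atomic[OF assms(1)] by blast
  have "RespR c x \<in> set s" "RespR c' x' \<in> set s"
    using assms(3,4) s(1) by (auto simp: conc_writes_def read_invs_def)
  then show ?thesis using conc_writes_reads_agree[OF assms(2) s(3,2)] by blast
qed

lemma reads_agree_write_history: "reads_agree (write_history k @ read_invs)"
  unfolding reads_agree_def
proof (intro allI impI, elim conjE)
  fix C h c c' u u'
  assume r: "read_phase (write_history k @ read_invs) C h" "RespR c u \<in> set h" "RespR c' u' \<in> set h"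
  consider "write_history k = seq_writes 0 1 1 2" | "write_history k = seq_writes 1 2 0 1"
    | "write_history k = conc_writes 0 1 1 2"
    unfolding write_history_def by metis
  then show "u = u'"
  proof cases
    case 1
    then have "u = 2" "u' = 2" using r read_phase_seq_writes_returns[of 0 1 1 2 C h] by auto
    then show ?thesis by simp
  next
    case 2
    then have "u = 1" "u' = 1" using r read_phase_seq_writes_returns[of 1 2 0 1 C h] by auto
    then show ?thesis by simp
  next
    case 3
    then show ?thesis using r read_phase_conc_writes_agree[of 0 1 1 2 C h] by auto
  qed
qed

lemma base_conf_outcome:
  assumes "k \<le> S" "read_phase (write_history k @ read_invs) B (write_history k @ read_invs)"
    "sst B = split_state k" "read_started B (Rd 0)"
  shows "2 \<in> outcomes B (write_history k @ read_invs)"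
  using assms
proof (induction k arbitrary: B)
  case 0
  have act: "active_reader (Rd 0)" and pend: "ph B (Rd 0) \<noteq> Idle"
    using 0(4) unfolding read_started_def active_reader_def by simp_all
  obtain ls C' os u where r: "run B ls C' os" "solo (Rd 0) {} ls" "RespR (Rd 0) u \<in> set os"
    by (rule solo_read_returns[OF 0(2) act pend, of "{}" 0]) simp
  have "read_phase (seq_writes 0 1 1 2 @ read_invs) C' (seq_writes 0 1 1 2 @ read_invs @ os)"
    using run_read_phase[OF r(1) 0(2)] by (simp add: write_history_def)
  then have "u = 2" using read_phase_seq_writes_returns r(3) by fastforce
  then show ?case using outcomes_run r(1,3) by blast
next
  case (Suc k)
  let ?hb = "write_history k @ read_invs"
  obtain B' where B': "read_phase ?hb B' ?hb" "sst B' = split_state k" "read_started B' (Rd 0)"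
    using base_conf[of k] Suc.prems(1) by auto
  have two: "2 \<in> outcomes B' ?hb" using Suc.IH[OF _ B'] Suc.prems(1) by simp
  have "\<forall>j. j \<noteq> k \<longrightarrow> sst B' j = sst B j" using B'(2) Suc.prems(3) unfolding split_state_def by auto
  then have indist: "indist (Rd 0) {k} B' B" using indist_read_started[OF B'(3) Suc.prems(4)] by blast
  have act: "active_reader (Rd 0)" and pend: "ph B' (Rd 0) \<noteq> Idle"
    using B'(3) unfolding read_started_def active_reader_def by simp_all
  obtain ls C' os w where r: "run B' ls C' os" "solo (Rd 0) {k} ls" "RespR (Rd 0) w \<in> set os"
    by (rule solo_read_returns[OF B'(1) act pend, of "{k}" k]) simp
  obtain C'' where "run B ls C'' os" using run_indist[OF r(1,2) indist] by blast
  then have "w \<in> outcomes B (write_history (Suc k) @ read_invs)" using outcomes_run r(3) by blast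
  moreover have "w \<in> outcomes B' ?hb" using outcomes_run r(1,3) by blast
  then have "w = 2" using two not_bivalent[OF B'(1) reads_agree_write_history] unfolding bivalent_def by blast
  ultimately show ?case by simp
qed

theorem no_atomic_register: False
proof -
  obtain B where B: "read_phase (write_history S @ read_invs) B (write_history S @ read_invs)"
    "sst B = split_state S" "read_started B (Rd 0)"
    using base_conf[of S] by blast
  have hist: "write_history S = seq_writes 1 2 0 1" using two_servers by (simp add: write_history_def)
  obtain ls C' os c where r: "run B ls C' os" "RespR c 2 \<in> set (write_history S @ read_invs @ os)"
    using base_conf_outcome[OF le_refl B] unfolding outcomes_def by auto
  have "read_phase (seq_writes 1 2 0 1 @ read_invs) C' (seq_writes 1 2 0 1 @ read_invs @ os)"
    using run_read_phase[OF r(1) B(1)] hist by simp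
  moreover have "RespR c 2 \<in> set (seq_writes 1 2 0 1 @ read_invs @ os)" using r(2) hist by simp
  ultimately have "(2::nat) = 1" using read_phase_seq_writes_returns by blast
  then show False by simp
qed

end

theorem theorem1:
  fixes P :: "('c, 's, 'm) proto" and S t W R :: nat
  assumes "S \<ge> 2" and "t \<ge> 1" and "W \<ge> 2" and "R \<ge> 2"
  shows "\<exists>C h. reach S t W R P C h \<and> \<not> atomic h"
proof (rule ccontr)
  assume "\<not> ?thesis"
  then interpret atomic_w1r2 S t W R P
    using assms by unfold_locales auto
  show False by (rule no_atomic_register)
qed

end
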